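(* $\mathtt{RealTime_{CA}} = \mathtt{pred}$-$\mathtt{ESO}$-$\mathtt{HORN}$. That is, a language $L\subseteq\Sigma^+$ is accepted in real time by a cellular automaton with parallel input, neighborhood $\{-1,0,1\}$ and the first cell as output cell if and only if $L=\{w\in\Sigma^+ : \langle w\rangle\models\Phi\}$ for some predecessor Horn formula $\Phi$.
   Context: Fix a finite alphabet $\Sigma$. A nonempty word $w=w_1\cdots w_n\in\Sigma^n$ is represented by the first-order structure $\langle w\rangle=([1,n];(Q_s)_{s\in\Sigma},\mathtt{min},\mathtt{max},\mathtt{suc},\mathtt{pred})$ with domain $[1,n]=\{1,\dots,n\}$, where $Q_s(i)\iff w_i=s$, $\mathtt{min}(i)\iff i=1$, $\mathtt{max}(i)\iff i=n$, $\mathtt{suc}(i)=i+1$ for $i<n$, $\mathtt{suc}(n)=n$, $\mathtt{pred}(i)=i-1$ for $i>1$, $\mathtt{pred}(1)=1$. Write $x-k$ for $\mathtt{pred}^k(x)$. A predecessor Horn formula is a formula $\Phi=\exists\mathbf{R}\forall x\forall y\,\psi(x,y)$ where $\mathbf{R}$ is a finite set of binary relation symbols (computation predicates) and $\psi$ is a conjunction of Horn clauses in the variables $x,y$ over the signature $\{(Q_s)_{s\in\Sigma},\mathtt{min},\mathtt{max},\mathtt{suc},\mathtt{pred}\}\cup\mathbf{R}$, each of the form $\delta_1\wedge\cdots\wedge\delta_r\to\delta_0$, where $\delta_0$ is either an atom $R(x,y)$ with $R\in\mathbf{R}$ or $\bot$ (false), and each hypothesis $\delta_i$ is one of: $Q_s(x-a)$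 or $Q_s(y-a)$ ($s\in\Sigma$, integer $a\ge0$); $U(x-a)$, $\neg U(x-a)$, $U(y-a)$, $\neg U(y-a)$ ($U\in\{\mathtt{min},\mathtt{max}\}$, integer $a\ge0$); $S(x-a,y-b)$ or $S(y-b,x-a)$ ($S\in\mathbf{R}$, integers $a,b\ge0$). The formula defines the language $\{w\in\Sigma^+:\langle w\rangle\models\Phi\}$, and $\mathtt{pred}$-$\mathtt{ESO}$-$\mathtt{HORN}$ denotes the class of languages so defined. A cellular automaton is $(Q,\Sigma,Q_{accept},\mathcal{N},\delta)$ with finite state set $Q\supseteq\Sigma$, accepting states $Q_{accept}\subseteq Q$, neighborhood $\mathcal{N}$ a finite ordered subset of $\mathbb{Z}$, and transition function $\delta:Q^{|\mathcal N|}\to Q$. On input $w=w_1\cdots w_n$ it works on cells $1,\dots,n$; cells outside $[1,n]$ are permanently in a special state $\sharp$. Writing $\langle c,t\rangle$ for the state of cell $c$ at time $t$, with parallel input $\langle c,1\rangle=w_c$ and $\langle c,t\rangle=\delta(\langle c+v,t-1\rangle: v\in\mathcal N)$ for $t>1$. $\mathtt{RealTime_{CA}}$ is the class of languages $L\subseteq\Sigma^+$ for which there is such an automaton with parallel input and $\mathcal N=\{-1,0,1\}$ such that for every $w\in\Sigma^+$ of length $n$, $w\in L\iff\langle 1,n\rangle\in Q_{accept}$. *)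

theory Defs
  imports Main
begin

text \<open>A nonempty word w = w_1...w_n is a list of length n; position i in [1,n]
  carries the letter w ! (i-1).  pred^a(i) = max 1 (i - a).\<close>

definition predk :: "nat \<Rightarrow> nat \<Rightarrow> nat" where
  "predk a i = max 1 (i - a)"

datatype var = VX | VY

text \<open>HQ s v a : Q_s(v - a);  HMin p v a : min(v - a) if p, else not min(v - a);
  HMax p v a likewise; HRxy S a b : S(x - a, y - b); HRyx S b a : S(y - b, x - a).\<close>

datatype 'a hyp =
    HQ 'a var nat
  | HMin bool var nat
  | HMax bool var nat
  | HRxy nat nat nat
  | HRyx nat nat nat

text \<open>A clause: list of hypotheses and a conclusion, Some R meaning R(x,y), None meaning False.
  A predecessor Horn formula is a finite list of clauses; the computation predicates
  are existentially quantified (those indices occurring in the formula).\<close>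

type_synonym 'a clause = "'a hyp list \<times> nat option"
type_synonym 'a horn_formula = "'a clause list"

definition var_val :: "var \<Rightarrow> nat \<Rightarrow> nat \<Rightarrow> nat" where
  "var_val v x y = (case v of VX \<Rightarrow> x | VY \<Rightarrow> y)"

fun hyp_holds :: "'a list \<Rightarrow> (nat \<Rightarrow> nat \<Rightarrow> nat \<Rightarrow> bool) \<Rightarrow> nat \<Rightarrow> nat \<Rightarrow> 'a hyp \<Rightarrow> bool" where
  "hyp_holds w R x y (HQ s v a) = (w ! (predk a (var_val v x y) - 1) = s)"
| "hyp_holds w R x y (HMin p v a) = ((predk a (var_val v x y) = 1) = p)"
| "hyp_holds w R x y (HMax p v a) = ((predk a (var_val v x y) = length w) = p)"
| "hyp_holds w R x y (HRxy S a b) = R S (predk a x) (predk b y)"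
| "hyp_holds w R x y (HRyx S b a) = R S (predk b y) (predk a x)"

definition clause_holds :: "'a list \<Rightarrow> (nat \<Rightarrow> nat \<Rightarrow> nat \<Rightarrow> bool) \<Rightarrow> nat \<Rightarrow> nat \<Rightarrow> 'a clause \<Rightarrow> bool" where
  "clause_holds w R x y cl =
     ((\<forall>h \<in> set (fst cl). hyp_holds w R x y h) \<longrightarrow>
       (case snd cl of None \<Rightarrow> False | Some S \<Rightarrow> R S x y))"

definition models :: "'a list \<Rightarrow> 'a horn_formula \<Rightarrow> bool" where
  "models w \<Phi> = (\<exists>R :: nat \<Rightarrow> nat \<Rightarrow> nat \<Rightarrow> bool.
      \<forall>x \<in> {1..length w}. \<forall>y \<in> {1..length w}. \<forall>cl \<in> set \<Phi>. clause_holds w R x y cl)"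

definition pred_ESO_HORN :: "('a::finite) list set \<Rightarrow> bool" where
  "pred_ESO_HORN L = (\<exists>\<Phi> :: 'a horn_formula. L = {w. w \<noteq> [] \<and> models w \<Phi>})"

text \<open>States are natural numbers; Q is a finite set of states, the input alphabet is
  embedded into Q by an injective map inp (Q \<supseteq> \<Sigma>), the special border state \<sharp> is None.
  ca_state \<delta> inp w t c is the state of cell c at time t+1 (None outside [1,n]).\<close>

fun ca_state :: "(nat option \<Rightarrow> nat option \<Rightarrow> nat option \<Rightarrow> nat) \<Rightarrow> ('a \<Rightarrow> nat) \<Rightarrow> 'a list
                 \<Rightarrow> nat \<Rightarrow> int \<Rightarrow> nat option" where
  "ca_state \<delta> inp w 0 c =
     (if 1 \<le> c \<and> c \<le> int (length w) then Some (inp (w ! nat (c - 1))) else None)"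
| "ca_state \<delta> inp w (Suc t) c =
     (if 1 \<le> c \<and> c \<le> int (length w)
      then Some (\<delta> (ca_state \<delta> inp w t (c - 1)) (ca_state \<delta> inp w t c) (ca_state \<delta> inp w t (c + 1)))
      else None)"

definition is_CA :: "nat set \<Rightarrow> ('a \<Rightarrow> nat) \<Rightarrow> nat set \<Rightarrow> (nat option \<Rightarrow> nat option \<Rightarrow> nat option \<Rightarrow> nat) \<Rightarrow> bool" where
  "is_CA Q inp Qacc \<delta> =
     (finite Q \<and> inj inp \<and> range inp \<subseteq> Q \<and> Qacc \<subseteq> Q \<and>
      (\<forall>a b c. (a = None \<or> the a \<in> Q) \<longrightarrow> (b = None \<or> the b \<in> Q) \<longrightarrow> (c = None \<or> the c \<in> Q)
                \<longrightarrow> \<delta> a b c \<in> Q))"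

definition RealTime_CA :: "('a::finite) list set \<Rightarrow> bool" where
  "RealTime_CA L = (\<exists>Q (inp :: 'a \<Rightarrow> nat) Qacc \<delta>. is_CA Q inp Qacc \<delta> \<and>
      (\<forall>w. w \<noteq> [] \<longrightarrow> (w \<in> L \<longleftrightarrow> the (ca_state \<delta> inp w (length w - 1) 1) \<in> Qacc)))"

end

theory Submission
  imports Defs
begin

text \<open>
  A real-time automaton is simulated by a Horn formula whose computation predicates record its
  space-time diagram: the state of cell c at time t is a predicate at the point (c + t, t + 1), the
  transition function becomes one Horn clause per triple of states, the least model is exactly the
  diagram, and goal clauses reject the non-accepting states of cell 1 at time n.

  Conversely, a Horn formula holds iff no goal clause fires in the least model of its definite
  clauses.  Every hypothesis looks back at most a bounded distance K, and the least model of a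
  prefix is the restriction of the least model of the word.  Hence the least-model facts at (x, y)
  and (y, x), for x \<le> y, only depend on a window of width K around these points, and that window
  is computed from the windows at (x - 1, y) and (x, y - 1).  This is a recurrence on the triangle
  x \<le> y with finitely many values, and a real-time automaton evaluates it at (n, n) by sweeping the
  triangle along its anti-diagonals.
\<close>

lemma predk_0 [simp]: "1 \<le> x \<Longrightarrow> predk 0 x = x"
  by (simp add: predk_def)

lemma predk_eq_1_iff: "predk a x = 1 \<longleftrightarrow> x \<le> a + 1"
  by (auto simp: predk_def)

lemma predk_eq_diff: "a + 1 \<le> x \<Longrightarrow> predk a x = x - a"
  by (simp add: predk_def)

lemma predk_eq_self_iff: "1 \<le> z \<Longrightarrow> predk i z = z \<longleftrightarrow> i = 0 \<or> z = 1"
  by (auto simp: predk_def)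

lemma predk_diff_1: "1 \<le> i \<Longrightarrow> 2 \<le> z \<Longrightarrow> predk (i - 1) (z - 1) = predk i z"
  by (cases i) (auto simp: predk_def)

lemma predk_le_max: "predk a z \<le> max 1 z"
  by (auto simp: predk_def)

section \<open>Real-time automata are defined by Horn formulas\<close>

lemma ca_state_eq_None_iff: "ca_state \<delta> inp w t c = None \<longleftrightarrow> \<not> (1 \<le> c \<and> c \<le> int (length w))"
  by (cases t) auto

lemma ca_state_in_states:
  assumes "is_CA Q inp Qacc \<delta>" and "ca_state \<delta> inp w t c = Some q"
  shows "q \<in> Q"
proof -
  have "ca_state \<delta> inp w t c = None \<or> the (ca_state \<delta> inp w t c) \<in> Q" for c
  proof (induction t arbitrary: c)
    case 0
    then show ?case using assms(1) unfolding is_CA_def by auto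
  next
    case (Suc t)
    have "\<delta> a b c \<in> Q" if "a = None \<or> the a \<in> Q" "b = None \<or> the b \<in> Q" "c = None \<or> the c \<in> Q"
      for a b c using assms(1) that unfolding is_CA_def by blast
    then show ?case using Suc.IH by simp
  qed
  then show ?thesis using assms(2) by (metis option.discI option.sel)
qed

text \<open>Cell c at time t is placed at the point (c + t, t + 1) of the triangle 1 \<le> y \<le> x \<le> n,
  so the three cells it reads from lie at (x - 2, y - 1), (x - 1, y - 1), (x, y - 1).  In
  real time the right border is never reached.\<close>

definition trace_state :: "(nat option \<Rightarrow> nat option \<Rightarrow> nat option \<Rightarrow> nat) \<Rightarrow> ('a \<Rightarrow> nat) \<Rightarrow> 'a list
    \<Rightarrow> nat \<Rightarrow> nat \<Rightarrow> nat option" where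
  "trace_state \<delta> inp w x y = ca_state \<delta> inp w (y - 1) (int x - int y + 1)"

lemma trace_state_Some:
  assumes "is_CA Q inp Qacc \<delta>" "1 \<le> y" "y \<le> x" "x \<le> length w"
  shows "\<exists>q \<in> Q. trace_state \<delta> inp w x y = Some q"
  using assms ca_state_eq_None_iff[of \<delta> inp w "y - 1" "int x - int y + 1"]
    ca_state_in_states[OF assms(1)] unfolding trace_state_def by fastforce

lemma trace_state_first_row:
  "1 \<le> x \<Longrightarrow> x \<le> length w \<Longrightarrow> trace_state \<delta> inp w x 1 = Some (inp (w ! (x - 1)))"
  by (simp add: trace_state_def nat_diff_distrib)

lemma trace_state_diagonal:
  assumes "2 \<le> y" "y \<le> length w"
  shows "trace_state \<delta> inp w y y =
    Some (\<delta> None (trace_state \<delta> inp w (y - 1) (y - 1)) (trace_state \<delta> inp w y (y - 1)))"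
proof -
  obtain t where "y = t + 2" using assms(1) by (metis add.commute le_Suc_ex)
  then show ?thesis using assms ca_state_eq_None_iff[of \<delta> inp w t 0] by (simp add: trace_state_def)
qed

lemma trace_state_below_diagonal:
  assumes "2 \<le> y" "y < x" "x \<le> length w"
  shows "trace_state \<delta> inp w x y = Some (\<delta> (trace_state \<delta> inp w (x - 2) (y - 1))
    (trace_state \<delta> inp w (x - 1) (y - 1)) (trace_state \<delta> inp w x (y - 1)))"
proof -
  obtain t where t: "y = t + 2" using assms(1) by (metis add.commute le_Suc_ex)
  have "int (x - 2) - int (y - 1) + 1 = int x - int y"
    "int (x - 1) - int (y - 1) + 1 = int x - int y + 1"
    "int x - int (y - 1) + 1 = int x - int y + 2"
    using assms by auto
  then show ?thesis using assms t by (simp add: trace_state_def algebra_simps)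
qed

text \<open>Computation predicates: 0 is x = y, 1 is y < x, and q + 2 says that the cell at (x, y)
  is in state q.\<close>

definition ca_order_clauses :: "'a clause list" where
  "ca_order_clauses =
    [([HMin True VX 0, HMin True VY 0], Some 0),
     ([HMin False VX 0, HMin False VY 0, HRxy 0 1 1], Some 0),
     ([HMin True VY 0, HMin False VX 0], Some 1),
     ([HMin False VY 0, HRxy 1 1 1], Some 1)]"

definition ca_input_clauses :: "('a \<Rightarrow> nat) \<Rightarrow> 'a list \<Rightarrow> 'a clause list" where
  "ca_input_clauses inp letters = [([HMin True VY 0, HQ s VX 0], Some (inp s + 2)). s \<leftarrow> letters]"

definition ca_transition_clauses ::
    "(nat option \<Rightarrow> nat option \<Rightarrow> nat option \<Rightarrow> nat) \<Rightarrow> nat list \<Rightarrow> 'a clause list" where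
  "ca_transition_clauses \<delta> states =
    [([HMin False VY 0, HRxy 0 0 0, HRxy (q1 + 2) 1 1, HRxy (q2 + 2) 0 1],
       Some (\<delta> None (Some q1) (Some q2) + 2)). q1 \<leftarrow> states, q2 \<leftarrow> states] @
    [([HMin False VY 0, HRxy 1 0 0, HRxy (q0 + 2) 2 1, HRxy (q1 + 2) 1 1, HRxy (q2 + 2) 0 1],
       Some (\<delta> (Some q0) (Some q1) (Some q2) + 2)). q0 \<leftarrow> states, q1 \<leftarrow> states, q2 \<leftarrow> states]"

definition ca_reject_clauses :: "nat set \<Rightarrow> nat list \<Rightarrow> 'a clause list" where
  "ca_reject_clauses Qacc states =
    [([HMax True VX 0, HMax True VY 0, HRxy (q + 2) 0 0], None). q \<leftarrow> states, q \<notin> Qacc]"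

definition ca_horn_formula :: "(nat option \<Rightarrow> nat option \<Rightarrow> nat option \<Rightarrow> nat) \<Rightarrow> ('a \<Rightarrow> nat)
    \<Rightarrow> nat set \<Rightarrow> nat list \<Rightarrow> 'a list \<Rightarrow> 'a horn_formula" where
  "ca_horn_formula \<delta> inp Qacc states letters =
    ca_order_clauses @ ca_input_clauses inp letters @ ca_transition_clauses \<delta> states @
    ca_reject_clauses Qacc states"

definition ca_trace :: "(nat option \<Rightarrow> nat option \<Rightarrow> nat option \<Rightarrow> nat) \<Rightarrow> ('a \<Rightarrow> nat) \<Rightarrow> 'a list
    \<Rightarrow> nat \<Rightarrow> nat \<Rightarrow> nat \<Rightarrow> bool" where
  "ca_trace \<delta> inp w S x y =
    (if S = 0 then x = y else if S = 1 then y < x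
     else y \<le> x \<and> trace_state \<delta> inp w x y = Some (S - 2))"

lemma clause_holds_definite:
  "clause_holds w R x y (hs, Some S) \<longleftrightarrow> ((\<forall>h \<in> set hs. hyp_holds w R x y h) \<longrightarrow> R S x y)"
  by (simp add: clause_holds_def)

context
  fixes \<delta> :: "nat option \<Rightarrow> nat option \<Rightarrow> nat option \<Rightarrow> nat" and inp :: "'a \<Rightarrow> nat" and w :: "'a list"
    and x y :: nat
  assumes x: "1 \<le> x" "x \<le> length w" and y: "1 \<le> y" "y \<le> length w"
begin

lemma ca_trace_order_clauses:
  "cl \<in> set ca_order_clauses \<Longrightarrow> clause_holds w (ca_trace \<delta> inp w) x y cl"
  using x y by (auto simp: ca_order_clauses_def clause_holds_def var_val_def ca_trace_def predk_def)

lemma ca_trace_input_clauses: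
  "cl \<in> set (ca_input_clauses inp letters) \<Longrightarrow> clause_holds w (ca_trace \<delta> inp w) x y cl"
  using x y trace_state_first_row[OF x]
  by (auto simp: ca_input_clauses_def clause_holds_def var_val_def ca_trace_def predk_eq_1_iff)

lemma ca_trace_diagonal_clause:
  "clause_holds w (ca_trace \<delta> inp w) x y
    ([HMin False VY 0, HRxy 0 0 0, HRxy (q1 + 2) 1 1, HRxy (q2 + 2) 0 1],
     Some (\<delta> None (Some q1) (Some q2) + 2))"
  (is "clause_holds _ _ _ _ (?hs, _)")
proof (unfold clause_holds_definite, intro impI)
  assume "\<forall>h \<in> set ?hs. hyp_holds w (ca_trace \<delta> inp w) x y h"
  then have "2 \<le> y" "x = y" "trace_state \<delta> inp w (y - 1) (y - 1) = Some q1"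
    "trace_state \<delta> inp w y (y - 1) = Some q2"
    using x y by (auto simp: var_val_def ca_trace_def predk_eq_diff)
  then show "ca_trace \<delta> inp w (\<delta> None (Some q1) (Some q2) + 2) x y"
    using trace_state_diagonal[of y w] y by (simp add: ca_trace_def)
qed

lemma ca_trace_below_diagonal_clause:
  "clause_holds w (ca_trace \<delta> inp w) x y
    ([HMin False VY 0, HRxy 1 0 0, HRxy (q0 + 2) 2 1, HRxy (q1 + 2) 1 1, HRxy (q2 + 2) 0 1],
     Some (\<delta> (Some q0) (Some q1) (Some q2) + 2))"
  (is "clause_holds _ _ _ _ (?hs, _)")
proof (unfold clause_holds_definite, intro impI)
  assume "\<forall>h \<in> set ?hs. hyp_holds w (ca_trace \<delta> inp w) x y h"
  then have "2 \<le> y" "y < x" "trace_state \<delta> inp w (x - 2) (y - 1) = Some q0"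
    "trace_state \<delta> inp w (x - 1) (y - 1) = Some q1" "trace_state \<delta> inp w x (y - 1) = Some q2"
    using x y by (auto simp: var_val_def ca_trace_def predk_eq_diff)
  then show "ca_trace \<delta> inp w (\<delta> (Some q0) (Some q1) (Some q2) + 2) x y"
    using trace_state_below_diagonal[of y x w] x by (simp add: ca_trace_def)
qed

lemma ca_trace_transition_clauses:
  "cl \<in> set (ca_transition_clauses \<delta> states) \<Longrightarrow> clause_holds w (ca_trace \<delta> inp w) x y cl"
  using ca_trace_diagonal_clause ca_trace_below_diagonal_clause
  by (auto simp: ca_transition_clauses_def)

lemma ca_trace_reject_clauses:
  assumes "the (ca_state \<delta> inp w (length w - 1) 1) \<in> Qacc"
  shows "cl \<in> set (ca_reject_clauses Qacc states) \<Longrightarrow> clause_holds w (ca_trace \<delta> inp w) x y cl"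
  using assms x y
  by (auto simp: ca_reject_clauses_def clause_holds_def var_val_def ca_trace_def trace_state_def)

end

lemma ca_trace_models:
  assumes "the (ca_state \<delta> inp w (length w - 1) 1) \<in> Qacc"
  shows "models w (ca_horn_formula \<delta> inp Qacc states letters)"
  unfolding models_def
proof (intro exI ballI)
  fix x y cl
  assume "x \<in> {1..length w}" "y \<in> {1..length w}"
    and cl: "cl \<in> set (ca_horn_formula \<delta> inp Qacc states letters)"
  then have x: "1 \<le> x" "x \<le> length w" and y: "1 \<le> y" "y \<le> length w" by auto
  from cl show "clause_holds w (ca_trace \<delta> inp w) x y cl"
    unfolding ca_horn_formula_def set_append Un_iff
    using ca_trace_order_clauses[OF x y] ca_trace_input_clauses[OF x y]
      ca_trace_transition_clauses[OF x y] ca_trace_reject_clauses[OF x y assms]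
    by blast
qed

locale ca_horn_model =
  fixes Q :: "nat set" and inp :: "'a \<Rightarrow> nat" and Qacc :: "nat set"
    and \<delta> :: "nat option \<Rightarrow> nat option \<Rightarrow> nat option \<Rightarrow> nat"
    and states :: "nat list" and letters :: "'a list" and w :: "'a list"
    and R :: "nat \<Rightarrow> nat \<Rightarrow> nat \<Rightarrow> bool"
  assumes ca: "is_CA Q inp Qacc \<delta>"
    and states: "set states = Q" and letters: "set letters = UNIV"
    and model: "\<forall>x \<in> {1..length w}. \<forall>y \<in> {1..length w}.
      \<forall>cl \<in> set (ca_horn_formula \<delta> inp Qacc states letters). clause_holds w R x y cl"
begin

lemma model_clause:
  assumes "(hs, concl) \<in> set (ca_horn_formula \<delta> inp Qacc states letters)"
    and "1 \<le> x" "x \<le> length w" "1 \<le> y" "y \<le> length w"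
    and "\<forall>h \<in> set hs. hyp_holds w R x y h"
  shows "case concl of None \<Rightarrow> False | Some S \<Rightarrow> R S x y"
  using model assms unfolding clause_holds_def by fastforce

lemma diagonal_clause_mem:
  "q1 \<in> Q \<Longrightarrow> q2 \<in> Q \<Longrightarrow>
    ([HMin False VY 0, HRxy 0 0 0, HRxy (q1 + 2) 1 1, HRxy (q2 + 2) 0 1],
     Some (\<delta> None (Some q1) (Some q2) + 2))
    \<in> set (ca_horn_formula \<delta> inp Qacc states letters)"
  using states by (auto simp: ca_horn_formula_def ca_transition_clauses_def image_iff)

lemma below_diagonal_clause_mem:
  "q0 \<in> Q \<Longrightarrow> q1 \<in> Q \<Longrightarrow> q2 \<in> Q \<Longrightarrow>
    ([HMin False VY 0, HRxy 1 0 0, HRxy (q0 + 2) 2 1, HRxy (q1 + 2) 1 1, HRxy (q2 + 2) 0 1],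
     Some (\<delta> (Some q0) (Some q1) (Some q2) + 2)) \<in> set (ca_horn_formula \<delta> inp Qacc states letters)"
  using states by (auto simp: ca_horn_formula_def ca_transition_clauses_def image_iff)

lemma model_eq: "1 \<le> x \<Longrightarrow> x \<le> length w \<Longrightarrow> R 0 x x"
proof (induction x)
  case (Suc x)
  show ?case
  proof (cases "x = 0")
    case True
    then show ?thesis
      using model_clause[of "[HMin True VX 0, HMin True VY 0]" "Some 0" "Suc x" "Suc x"] Suc.prems
      by (simp add: ca_horn_formula_def ca_order_clauses_def var_val_def)
  next
    case False
    then show ?thesis
      using model_clause[of "[HMin False VX 0, HMin False VY 0, HRxy 0 1 1]" "Some 0" "Suc x" "Suc x"]
        Suc
      by (simp add: ca_horn_formula_def ca_order_clauses_def var_val_def predk_def)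
  qed
qed simp

lemma model_less: "1 \<le> y \<Longrightarrow> y < x \<Longrightarrow> x \<le> length w \<Longrightarrow> R 1 x y"
proof (induction y arbitrary: x)
  case (Suc y)
  show ?case
  proof (cases "y = 0")
    case True
    then show ?thesis
      using model_clause[of "[HMin True VY 0, HMin False VX 0]" "Some 1" x "Suc y"] Suc.prems
      by (simp add: ca_horn_formula_def ca_order_clauses_def var_val_def predk_def)
  next
    case False
    then show ?thesis
      using model_clause[of "[HMin False VY 0, HRxy 1 1 1]" "Some 1" x "Suc y"] Suc Suc.IH[of "x - 1"]
      by (simp add: ca_horn_formula_def ca_order_clauses_def var_val_def predk_def)
  qed
qed simp

lemma model_trace_first_row:
  assumes "1 \<le> x" "x \<le> length w" "trace_state \<delta> inp w x 1 = Some q"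
  shows "R (q + 2) x 1"
proof -
  have "q = inp (w ! (x - 1))" using assms trace_state_first_row[of x w \<delta> inp] by simp
  then show ?thesis
    using model_clause[of "[HMin True VY 0, HQ (w ! (x - 1)) VX 0]" "Some (q + 2)" x 1] assms letters
    by (simp add: ca_horn_formula_def ca_input_clauses_def var_val_def)
qed

lemma model_trace_next_row:
  assumes row: "\<And>x q. y \<le> x \<Longrightarrow> x \<le> length w \<Longrightarrow> trace_state \<delta> inp w x y = Some q \<Longrightarrow> R (q + 2) x y"
    and "1 \<le> y" "y < x" "x \<le> length w" "trace_state \<delta> inp w x (Suc y) = Some q"
  shows "R (q + 2) x (Suc y)"
proof -
  have y: "2 \<le> Suc y" "predk 1 (Suc y) = y" using assms(2) by (auto simp: predk_def)
  show ?thesis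
  proof (cases "x = Suc y")
    case True
    obtain q1 q2 where q: "q1 \<in> Q" "trace_state \<delta> inp w y y = Some q1"
      "q2 \<in> Q" "trace_state \<delta> inp w (Suc y) y = Some q2"
      using trace_state_Some[OF ca, of y y w] trace_state_Some[OF ca, of y "Suc y" w] assms True by auto
    then have "q = \<delta> None (Some q1) (Some q2)"
      using trace_state_diagonal[OF y(1), of w \<delta> inp] assms True by simp
    moreover have "R 0 x (Suc y)" "R (q1 + 2) y y" "R (q2 + 2) (Suc y) y"
      using model_eq row q assms True by auto
    ultimately show ?thesis
      using model_clause[OF diagonal_clause_mem, of q1 q2 x "Suc y"] assms True y q
      by (simp add: var_val_def)
  next
    case False
    then have x: "Suc y < x" "predk 1 x = x - 1" "predk 2 x = x - 2"
      using assms by (auto simp: predk_def)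
    then have "y \<le> x - 2" "y \<le> x - 1" "x - 2 \<le> length w" "x - 1 \<le> length w" using assms by auto
    then obtain q0 q1 q2 where q: "q0 \<in> Q" "trace_state \<delta> inp w (x - 2) y = Some q0"
      "q1 \<in> Q" "trace_state \<delta> inp w (x - 1) y = Some q1" "q2 \<in> Q" "trace_state \<delta> inp w x y = Some q2"
      using trace_state_Some[OF ca, of y "x - 2" w] trace_state_Some[OF ca, of y "x - 1" w]
        trace_state_Some[OF ca, of y x w] assms
      by (meson less_imp_le)
    then have "q = \<delta> (Some q0) (Some q1) (Some q2)"
      using trace_state_below_diagonal[OF y(1) x(1), of w \<delta> inp] assms by simp
    moreover have "R 1 x (Suc y)" "R (q0 + 2) (x - 2) y" "R (q1 + 2) (x - 1) y" "R (q2 + 2) x y"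
      using model_less row q assms x(1) \<open>y \<le> x - 2\<close> \<open>y \<le> x - 1\<close> by auto
    ultimately show ?thesis
      using model_clause[OF below_diagonal_clause_mem, of q0 q1 q2 x "Suc y"] assms x y q
      by (simp add: var_val_def)
  qed
qed

lemma model_trace:
  "1 \<le> y \<Longrightarrow> y \<le> x \<Longrightarrow> x \<le> length w \<Longrightarrow> trace_state \<delta> inp w x y = Some q \<Longrightarrow> R (q + 2) x y"
proof (induction y arbitrary: x q)
  case (Suc y)
  then show ?case
    using model_trace_first_row model_trace_next_row[of y x q] by (cases "y = 0") auto
qed simp

lemma model_accepted:
  assumes "w \<noteq> []"
  shows "the (ca_state \<delta> inp w (length w - 1) 1) \<in> Qacc"
proof (rule ccontr)
  let ?n = "length w"
  have n: "1 \<le> ?n" using assms by (simp add: Suc_le_eq)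
  then obtain q where q: "q \<in> Q" "trace_state \<delta> inp w ?n ?n = Some q"
    using trace_state_Some[OF ca, of ?n ?n w] by auto
  assume "the (ca_state \<delta> inp w (?n - 1) 1) \<notin> Qacc"
  then have "q \<notin> Qacc" using q by (simp add: trace_state_def)
  then show False
    using model_clause[of "[HMax True VX 0, HMax True VY 0, HRxy (q + 2) 0 0]" None ?n ?n]
      model_trace[OF n le_refl le_refl q(2)] n q states
    by (simp add: ca_horn_formula_def ca_reject_clauses_def var_val_def)
qed

end

lemma pred_ESO_HORN_if_RealTime_CA:
  fixes L :: "('a::finite) list set"
  assumes L: "L \<subseteq> {w. w \<noteq> []}" and "RealTime_CA L"
  shows "pred_ESO_HORN L"
proof -
  obtain Q and inp :: "'a \<Rightarrow> nat" and Qacc \<delta> where ca: "is_CA Q inp Qacc \<delta>"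
    and acc: "\<And>w. w \<noteq> [] \<Longrightarrow> w \<in> L \<longleftrightarrow> the (ca_state \<delta> inp w (length w - 1) 1) \<in> Qacc"
    using assms(2) unfolding RealTime_CA_def by blast
  obtain letters :: "'a list" where letters: "set letters = UNIV"
    using finite_list[of "UNIV :: 'a set"] by auto
  have "finite Q" using ca unfolding is_CA_def by blast
  then obtain states where states: "set states = Q"
    using finite_list by blast
  let ?\<Phi> = "ca_horn_formula \<delta> inp Qacc states letters"
  have "w \<in> L \<longleftrightarrow> models w ?\<Phi>" if "w \<noteq> []" for w
  proof
    assume "w \<in> L"
    then show "models w ?\<Phi>" using acc[OF that] ca_trace_models by blast
  next
    assume "models w ?\<Phi>"
    then obtain R where "\<forall>x \<in> {1..length w}. \<forall>y \<in> {1..length w}. \<forall>cl \<in> set ?\<Phi>. clause_holds w R x y cl"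
      unfolding models_def by blast
    then interpret ca_horn_model Q inp Qacc \<delta> states letters w R
      using ca states letters by unfold_locales
    show "w \<in> L" using acc[OF that] model_accepted[OF that] by blast
  qed
  then have "L = {w. w \<noteq> [] \<and> models w ?\<Phi>}" using L by blast
  then show ?thesis unfolding pred_ESO_HORN_def by blast
qed

section \<open>Grid recurrences are computed in real time\<close>

type_synonym ('a, 'v) grid_rule = "bool \<Rightarrow> bool \<Rightarrow> bool \<Rightarrow> 'a \<Rightarrow> 'a \<Rightarrow> 'v \<Rightarrow> 'v \<Rightarrow> 'v"

text \<open>The flag b is passed to the left neighbour and reset for the lower one, so starting from
  (n, n) with b = True it marks the top row y = n.  The default d replaces neighbours outside the
  triangle 1 \<le> x \<le> y.\<close>

fun grid_val :: "('a, 'v) grid_rule \<Rightarrow> 'v \<Rightarrow> 'a list \<Rightarrow> nat \<Rightarrow> nat \<Rightarrow> bool \<Rightarrow> 'v" where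
  "grid_val f d w x y b = f (x \<le> 1) (y \<le> x) b (w ! (x - 1)) (w ! (y - 1))
      (if x \<le> 1 then d else grid_val f d w (x - 1) y b)
      (if y \<le> x then d else grid_val f d w x (y - 1) False)"

declare grid_val.simps [simp del]

definition apply_grid_rule :: "('a, 'v) grid_rule \<Rightarrow> 'v \<Rightarrow> ('a, 'v) grid_rule" where
  "apply_grid_rule f d x_le_1 y_le_x b a c left down =
    f x_le_1 y_le_x b a c (if x_le_1 then d else left) (if y_le_x then d else down)"

lemma grid_val_eq_apply_grid_rule:
  assumes "\<not> x \<le> 1 \<Longrightarrow> left = grid_val f d w (x - 1) y b"
    and "\<not> y \<le> x \<Longrightarrow> down = grid_val f d w x (y - 1) False"
  shows "grid_val f d w x y b =
    apply_grid_rule f d (x \<le> 1) (y \<le> x) b (w ! (x - 1)) (w ! (y - 1)) left down"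
  using assms by (simp add: apply_grid_rule_def grid_val.simps[of f d w x y b])

text \<open>A sweep cell Sweep ly lx x_gt_1 v_true v_false stores the letters at y and x, whether
  x \<ge> 2, and the values for both flags at the point (x, y) it represents.\<close>

datatype ('a, 'v) sweep_cell = Input 'a | Sweep 'a 'a bool 'v 'v

definition sweep_cells :: "'v set \<Rightarrow> ('a, 'v) sweep_cell set" where
  "sweep_cells V =
    range Input \<union> (\<lambda>(ly, lx, s, vt, vf). Sweep ly lx s vt vf) ` (UNIV \<times> UNIV \<times> UNIV \<times> V \<times> V)"

lemma Input_in_sweep_cells: "Input a \<in> sweep_cells V"
  by (simp add: sweep_cells_def)

lemma Sweep_in_sweep_cells: "vt \<in> V \<Longrightarrow> vf \<in> V \<Longrightarrow> Sweep ly lx s vt vf \<in> sweep_cells V"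
  unfolding sweep_cells_def by (rule UnI2, rule image_eqI[where x = "(ly, lx, s, vt, vf)"]) auto

lemma finite_sweep_cells:
  "finite (UNIV :: 'a set) \<Longrightarrow> finite V \<Longrightarrow> finite (sweep_cells V :: ('a, 'v) sweep_cell set)"
  unfolding sweep_cells_def by (intro finite_UnI finite_imageI) (auto intro!: finite_cartesian_product)

locale grid =
  fixes f :: "('a, 'v) grid_rule" and d :: 'v
begin

abbreviation "rule \<equiv> apply_grid_rule f d"

fun letter_y :: "('a, 'v) sweep_cell \<Rightarrow> 'a" where
  "letter_y (Input a) = a"
| "letter_y (Sweep ly lx s vt vf) = ly"

fun letter_x :: "('a, 'v) sweep_cell \<Rightarrow> 'a" where
  "letter_x (Input a) = a"
| "letter_x (Sweep ly lx s vt vf) = lx"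

fun x_gt_1 :: "('a, 'v) sweep_cell \<Rightarrow> bool" where
  "x_gt_1 (Input a) = False"
| "x_gt_1 (Sweep ly lx s vt vf) = s"

fun cell_value :: "bool \<Rightarrow> ('a, 'v) sweep_cell \<Rightarrow> 'v" where
  "cell_value b (Input a) = f True True b a a d d"
| "cell_value b (Sweep ly lx s vt vf) = (if b then vt else vf)"

definition represents :: "'a list \<Rightarrow> nat \<Rightarrow> nat \<Rightarrow> ('a, 'v) sweep_cell \<Rightarrow> bool" where
  "represents w x y c \<longleftrightarrow>
    (y \<le> length w \<longrightarrow> letter_y c = w ! (y - 1)) \<and>
    (1 \<le> x \<and> x \<le> length w \<longrightarrow> letter_x c = w ! (x - 1)) \<and>
    (x_gt_1 c \<longleftrightarrow> 2 \<le> x) \<and>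
    (\<forall>b. 1 \<le> x \<and> y \<le> length w \<longrightarrow> cell_value b c = grid_val f d w x y b)"

lemma representsD:
  assumes "represents w x y c"
  shows "y \<le> length w \<Longrightarrow> letter_y c = w ! (y - 1)"
    and "1 \<le> x \<Longrightarrow> x \<le> length w \<Longrightarrow> letter_x c = w ! (x - 1)"
    and "x_gt_1 c \<longleftrightarrow> 2 \<le> x"
    and "1 \<le> x \<Longrightarrow> y \<le> length w \<Longrightarrow> cell_value b c = grid_val f d w x y b"
  using assms unfolding represents_def by auto

text \<open>Cell k at time t represents the point (t + 2 - k, t + k).  One step of the automaton
  advances it to (t + 3 - k, t + k + 1), passing through (t + 2 - k, t + k + 1) (from the right
  neighbour and the cell itself) and (t + 3 - k, t + k) (from the cell and its left neighbour).\<close>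

definition step_letter_y :: "('a, 'v) sweep_cell \<Rightarrow> ('a, 'v) sweep_cell option \<Rightarrow> 'a" where
  "step_letter_y c R = (case R of None \<Rightarrow> letter_y c | Some r \<Rightarrow> letter_y r)"

definition step_x_gt_1 :: "('a, 'v) sweep_cell option \<Rightarrow> bool" where
  "step_x_gt_1 L = (case L of None \<Rightarrow> True | Some l \<Rightarrow> x_gt_1 l)"

definition step_letter_x ::
    "('a, 'v) sweep_cell option \<Rightarrow> ('a, 'v) sweep_cell \<Rightarrow> ('a, 'v) sweep_cell option \<Rightarrow> 'a" where
  "step_letter_x L c R = (case L of None \<Rightarrow> step_letter_y c R | Some l \<Rightarrow> letter_x l)"

definition step_left :: "('a, 'v) sweep_cell \<Rightarrow> ('a, 'v) sweep_cell option \<Rightarrow> bool \<Rightarrow> 'v" where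
  "step_left c R b = rule (\<not> x_gt_1 c) False b (letter_x c) (step_letter_y c R)
     (case R of None \<Rightarrow> d | Some r \<Rightarrow> cell_value b r) (cell_value False c)"

definition step_down ::
    "('a, 'v) sweep_cell option \<Rightarrow> ('a, 'v) sweep_cell \<Rightarrow> ('a, 'v) sweep_cell option \<Rightarrow> 'v" where
  "step_down L c R = rule (\<not> step_x_gt_1 L) False False (step_letter_x L c R) (letter_y c)
     (cell_value False c) (case L of None \<Rightarrow> d | Some l \<Rightarrow> cell_value False l)"

definition step_value ::
    "('a, 'v) sweep_cell option \<Rightarrow> ('a, 'v) sweep_cell \<Rightarrow> ('a, 'v) sweep_cell option \<Rightarrow> bool \<Rightarrow> 'v" where
  "step_value L c R b = rule (\<not> step_x_gt_1 L) (L = None) b (step_letter_x L c R) (step_letter_y c R)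
     (step_left c R b) (step_down L c R)"

definition sweep_step :: "('a, 'v) sweep_cell option \<Rightarrow> ('a, 'v) sweep_cell option
    \<Rightarrow> ('a, 'v) sweep_cell option \<Rightarrow> ('a, 'v) sweep_cell" where
  "sweep_step L C R = (case C of None \<Rightarrow> Input undefined | Some c \<Rightarrow>
     Sweep (step_letter_y c R) (step_letter_x L c R) (step_x_gt_1 L) (step_value L c R True)
       (step_value L c R False))"

context
  fixes w t k L c R
  assumes k: "1 \<le> k" "k \<le> length w"
    and c: "represents w (t + 2 - k) (t + k) c"
    and left: "k = 1 \<Longrightarrow> L = None" "2 \<le> k \<Longrightarrow> \<exists>l. L = Some l \<and> represents w (t + 3 - k) (t + k - 1) l"
    and right: "k = length w \<Longrightarrow> R = None"
      "k < length w \<Longrightarrow> \<exists>r. R = Some r \<and> represents w (t + 1 - k) (t + k + 1) r"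
begin

lemma step_letter_y_eq:
  assumes "t + k < length w"
  shows "step_letter_y c R = w ! (t + k)"
proof -
  obtain r where "R = Some r" "represents w (t + 1 - k) (t + k + 1) r"
    using right(2) assms by auto
  then show ?thesis using representsD(1) assms unfolding step_letter_y_def by fastforce
qed

lemma step_x_gt_1_iff: "step_x_gt_1 L \<longleftrightarrow> k \<le> t + 1"
proof (cases "k = 1")
  case False
  then obtain l where "L = Some l" "represents w (t + 3 - k) (t + k - 1) l"
    using left(2) k by auto
  then show ?thesis using representsD(3) unfolding step_x_gt_1_def by fastforce
qed (use left(1) in \<open>simp add: step_x_gt_1_def\<close>)

lemma step_letter_x_eq:
  assumes "k \<le> t + 2" "t + 3 - k \<le> length w"
  shows "step_letter_x L c R = w ! (t + 2 - k)"
proof (cases "k = 1")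
  case True
  then show ?thesis using left(1) step_letter_y_eq assms by (simp add: step_letter_x_def add.commute)
next
  case False
  then obtain l where "L = Some l" "represents w (t + 3 - k) (t + k - 1) l"
    using left(2) k by auto
  then show ?thesis using representsD(2) assms unfolding step_letter_x_def by fastforce
qed

lemma step_left_eq:
  assumes "k \<le> t + 1" "t + k < length w"
  shows "step_left c R b = grid_val f d w (t + 2 - k) (t + k + 1) b"
proof -
  obtain r where r: "R = Some r" "represents w (t + 1 - k) (t + k + 1) r"
    using right(2) assms by auto
  have "grid_val f d w (t + 2 - k) (t + k + 1) b = rule (t + 2 - k \<le> 1) (t + k + 1 \<le> t + 2 - k) b
      (w ! (t + 2 - k - 1)) (w ! (t + k + 1 - 1)) (cell_value b r) (cell_value False c)"
  proof (rule grid_val_eq_apply_grid_rule)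
    show "\<not> t + 2 - k \<le> 1 \<Longrightarrow> cell_value b r = grid_val f d w (t + 2 - k - 1) (t + k + 1) b"
      using representsD(4)[OF r(2)] assms by (simp add: Suc_diff_le)
    show "cell_value False c = grid_val f d w (t + 2 - k) (t + k + 1 - 1) False"
      using representsD(4)[OF c] assms by simp
  qed
  also have "\<dots> = step_left c R b"
  proof -
    have "(t + 2 - k \<le> 1) = (\<not> x_gt_1 c)" using representsD(3)[OF c] by auto
    moreover have "(t + k + 1 \<le> t + 2 - k) = False" using k by auto
    moreover have "w ! (t + 2 - k - 1) = letter_x c" using representsD(2)[OF c] assms k by auto
    moreover have "w ! (t + k + 1 - 1) = step_letter_y c R" using step_letter_y_eq assms by simp
    ultimately show ?thesis unfolding step_left_def r(1) by simp
  qed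
  finally show ?thesis by simp
qed

lemma step_down_eq:
  assumes "2 \<le> k" "k \<le> t + 2" "t + k \<le> length w"
  shows "step_down L c R = grid_val f d w (t + 3 - k) (t + k) False"
proof -
  obtain l where l: "L = Some l" "represents w (t + 3 - k) (t + k - 1) l"
    using left(2) assms by auto
  have "grid_val f d w (t + 3 - k) (t + k) False = rule (t + 3 - k \<le> 1) (t + k \<le> t + 3 - k) False
      (w ! (t + 3 - k - 1)) (w ! (t + k - 1)) (cell_value False c) (cell_value False l)"
  proof (rule grid_val_eq_apply_grid_rule)
    show "\<not> t + 3 - k \<le> 1 \<Longrightarrow> cell_value False c = grid_val f d w (t + 3 - k - 1) (t + k) False"
      using representsD(4)[OF c] assms by (simp add: Suc_diff_le)
    show "cell_value False l = grid_val f d w (t + 3 - k) (t + k - 1) False"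
      using representsD(4)[OF l(2)] assms by simp
  qed
  also have "\<dots> = step_down L c R"
  proof -
    have "(t + 3 - k \<le> 1) = (\<not> step_x_gt_1 L)" using step_x_gt_1_iff by auto
    moreover have "(t + k \<le> t + 3 - k) = False" using assms by auto
    moreover have "w ! (t + 3 - k - 1) = step_letter_x L c R" using step_letter_x_eq assms by simp
    moreover have "w ! (t + k - 1) = letter_y c" using representsD(1)[OF c] assms by simp
    ultimately show ?thesis unfolding step_down_def l(1) by simp
  qed
  finally show ?thesis by simp
qed

lemma step_value_eq:
  assumes "k \<le> t + 2" "t + k < length w"
  shows "step_value L c R b = grid_val f d w (t + 3 - k) (t + k + 1) b"
proof -
  have "grid_val f d w (t + 3 - k) (t + k + 1) b = rule (t + 3 - k \<le> 1) (t + k + 1 \<le> t + 3 - k) b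
      (w ! (t + 3 - k - 1)) (w ! (t + k + 1 - 1)) (step_left c R b) (step_down L c R)"
  proof (rule grid_val_eq_apply_grid_rule)
    show "\<not> t + 3 - k \<le> 1 \<Longrightarrow> step_left c R b = grid_val f d w (t + 3 - k - 1) (t + k + 1) b"
      using step_left_eq assms by (simp add: Suc_diff_le)
    show "\<not> t + k + 1 \<le> t + 3 - k \<Longrightarrow> step_down L c R = grid_val f d w (t + 3 - k) (t + k + 1 - 1) False"
      using step_down_eq assms by simp
  qed
  also have "\<dots> = step_value L c R b"
  proof -
    have "(t + 3 - k \<le> 1) = (\<not> step_x_gt_1 L)" using step_x_gt_1_iff by auto
    moreover have "(t + k + 1 \<le> t + 3 - k) = (L = None)"
      using assms k left by (cases "k = 1") auto
    moreover have "w ! (t + 3 - k - 1) = step_letter_x L c R" using step_letter_x_eq assms k by simp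
    moreover have "w ! (t + k + 1 - 1) = step_letter_y c R" using step_letter_y_eq assms by simp
    ultimately show ?thesis unfolding step_value_def by simp
  qed
  finally show ?thesis by simp
qed

lemma represents_sweep_step: "represents w (t + 3 - k) (t + k + 1) (sweep_step L (Some c) R)"
  unfolding represents_def sweep_step_def
  using step_letter_y_eq step_x_gt_1_iff step_letter_x_eq step_value_eq k by auto

end

fun sweep_run :: "'a list \<Rightarrow> nat \<Rightarrow> int \<Rightarrow> ('a, 'v) sweep_cell option" where
  "sweep_run w 0 c = (if 1 \<le> c \<and> c \<le> int (length w) then Some (Input (w ! nat (c - 1))) else None)"
| "sweep_run w (Suc t) c = (if 1 \<le> c \<and> c \<le> int (length w)
      then Some (sweep_step (sweep_run w t (c - 1)) (sweep_run w t c) (sweep_run w t (c + 1)))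
      else None)"

lemma sweep_run_eq_None_iff: "sweep_run w t c = None \<longleftrightarrow> \<not> (1 \<le> c \<and> c \<le> int (length w))"
  by (cases t) auto

lemma sweep_run_represents:
  "1 \<le> k \<Longrightarrow> k \<le> length w \<Longrightarrow> \<exists>s. sweep_run w t (int k) = Some s \<and> represents w (t + 2 - k) (t + k) s"
proof (induction t arbitrary: k)
  case 0
  then have "represents w (2 - k) k (Input (w ! (k - 1)))"
    by (cases "k = 1") (auto simp: represents_def grid_val.simps[of f d w "Suc 0" "Suc 0"])
  then show ?case using 0 by (auto simp: nat_diff_distrib numeral_2_eq_2)
next
  case (Suc t)
  obtain c where c: "sweep_run w t (int k) = Some c" "represents w (t + 2 - k) (t + k) c"
    using Suc by blast
  let ?L = "sweep_run w t (int k - 1)" and ?R = "sweep_run w t (int k + 1)"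
  have "represents w (t + 3 - k) (t + k + 1) (sweep_step ?L (Some c) ?R)"
  proof (rule represents_sweep_step)
    show "k = 1 \<Longrightarrow> ?L = None" "k = length w \<Longrightarrow> ?R = None"
      by (simp_all add: sweep_run_eq_None_iff)
    show "2 \<le> k \<Longrightarrow> \<exists>l. ?L = Some l \<and> represents w (t + 3 - k) (t + k - 1) l"
      using Suc.IH[of "k - 1"] Suc.prems by (auto simp: of_nat_diff eval_nat_numeral)
    show "k < length w \<Longrightarrow> \<exists>r. ?R = Some r \<and> represents w (t + 1 - k) (t + k + 1) r"
      using Suc.IH[of "k + 1"] Suc.prems by (auto simp: add.commute)
  qed (use Suc.prems c in auto)
  then show ?case using Suc.prems c by (auto simp: eval_nat_numeral)
qed

lemma sweep_run_final:
  assumes "w \<noteq> []"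
  shows "\<exists>s. sweep_run w (length w - 1) 1 = Some s \<and>
    cell_value True s = grid_val f d w (length w) (length w) True"
proof -
  have n: "1 \<le> length w" using assms by (simp add: Suc_le_eq)
  then have e: "length w - 1 + 2 - 1 = length w" "length w - 1 + 1 = length w" by auto
  obtain s where "sweep_run w (length w - 1) 1 = Some s" "represents w (length w) (length w) s"
    using sweep_run_represents[of 1 w "length w - 1"] n unfolding e by auto
  then show ?thesis using n unfolding represents_def by auto
qed

lemma sweep_step_in_sweep_cells:
  assumes "\<And>x_le_1 y_le_x b a c l dn. f x_le_1 y_le_x b a c l dn \<in> V"
  shows "sweep_step L C R \<in> sweep_cells V"
  using assms
  by (auto simp: sweep_step_def step_value_def apply_grid_rule_def Input_in_sweep_cells
      intro!: Sweep_in_sweep_cells split: option.split)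

lemma sweep_run_in_sweep_cells:
  "(\<And>x_le_1 y_le_x b a c l dn. f x_le_1 y_le_x b a c l dn \<in> V) \<Longrightarrow> sweep_run w t k = Some s \<Longrightarrow> s \<in> sweep_cells V"
  by (cases t) (auto simp: Input_in_sweep_cells sweep_step_in_sweep_cells split: if_splits)

lemma ca_state_eq_map_sweep_run:
  assumes f_V: "\<And>x_le_1 y_le_x b a c l dn. f x_le_1 y_le_x b a c l dn \<in> V"
    and dec_enc: "\<And>s. s \<in> sweep_cells V \<Longrightarrow> dec (enc s) = s"
  shows "ca_state (\<lambda>a b c. enc (sweep_step (map_option dec a) (map_option dec b) (map_option dec c)))
    (\<lambda>a. enc (Input a)) w t k = map_option enc (sweep_run w t k)"
proof (induction t arbitrary: k)
  case (Suc t)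
  have "map_option dec (map_option enc (sweep_run w t k')) = sweep_run w t k'" for k'
    using sweep_run_in_sweep_cells[OF f_V, of w t k'] dec_enc by (cases "sweep_run w t k'") auto
  then show ?case using Suc by simp
qed simp

end

lemma RealTime_CA_if_grid_val:
  fixes L :: "('a::finite) list set" and f :: "('a, 'v) grid_rule"
  assumes fin: "finite V" and f_V: "\<And>x_le_1 y_le_x b a c l dn. f x_le_1 y_le_x b a c l dn \<in> V"
    and acc: "\<And>w. w \<noteq> [] \<Longrightarrow> w \<in> L \<longleftrightarrow> grid_val f d w (length w) (length w) True \<in> A"
  shows "RealTime_CA L"
proof -
  interpret grid f d .
  have "finite (sweep_cells V :: ('a, 'v) sweep_cell set)"
    by (rule finite_sweep_cells) (simp_all add: fin)
  then obtain N and dec :: "nat \<Rightarrow> ('a, 'v) sweep_cell"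
    where dec: "sweep_cells V = dec ` {i. i < N}" "inj_on dec {i. i < N}"
    using finite_imp_nat_seg_image_inj_on by blast
  define enc where "enc = the_inv_into {i. i < N} dec"
  have enc: "s \<in> sweep_cells V \<Longrightarrow> enc s < N \<and> dec (enc s) = s" for s
    unfolding enc_def using dec the_inv_into_into[OF dec(2)]
    by (metis f_the_inv_into_f mem_Collect_eq order_refl)
  define \<delta> where
    "\<delta> a b c = enc (sweep_step (map_option dec a) (map_option dec b) (map_option dec c))" for a b c
  define inp where "inp a = enc (Input a)" for a
  define Qacc where "Qacc = {i. i < N \<and> cell_value True (dec i) \<in> A}"
  have "is_CA {i. i < N} inp Qacc \<delta>"
    unfolding is_CA_def
  proof (intro conjI allI impI)
    show "inj inp" unfolding inp_def
      by (rule injI) (metis Input_in_sweep_cells sweep_cell.inject(1) enc)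
  qed (use enc[OF Input_in_sweep_cells] enc[OF sweep_step_in_sweep_cells[OF f_V]] in
      \<open>auto simp: inp_def Qacc_def \<delta>_def\<close>)
  moreover have run: "ca_state \<delta> inp w t k = map_option enc (sweep_run w t k)" for w t k
    unfolding \<delta>_def inp_def using ca_state_eq_map_sweep_run[OF f_V] enc by blast
  have "w \<in> L \<longleftrightarrow> the (ca_state \<delta> inp w (length w - 1) 1) \<in> Qacc" if ne: "w \<noteq> []" for w
  proof -
    obtain s where s: "sweep_run w (length w - 1) 1 = Some s"
      "cell_value True s = grid_val f d w (length w) (length w) True"
      using sweep_run_final[OF ne] by blast
    then show ?thesis
      using acc[OF ne] run enc[OF sweep_run_in_sweep_cells[OF f_V s(1)]] by (simp add: Qacc_def)
  qed
  ultimately show ?thesis unfolding RealTime_CA_def by blast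
qed

section \<open>Least models of Horn formulas\<close>

text \<open>Hypotheses are evaluated against a letter function lt and an interpretation mx of max, so that
  a prefix [1, y] of a word can be treated as a structure of its own, in which either no position
  or the last one is max.\<close>

fun hyp_sat :: "(nat \<Rightarrow> 'a) \<Rightarrow> (nat \<Rightarrow> bool) \<Rightarrow> (nat \<Rightarrow> nat \<Rightarrow> nat \<Rightarrow> bool) \<Rightarrow> nat \<Rightarrow> nat \<Rightarrow> 'a hyp \<Rightarrow> bool"
  where
  "hyp_sat lt mx R x y (HQ s v a) = (lt (predk a (var_val v x y)) = s)"
| "hyp_sat lt mx R x y (HMin p v a) = ((predk a (var_val v x y) = 1) = p)"
| "hyp_sat lt mx R x y (HMax p v a) = (mx (predk a (var_val v x y)) = p)"
| "hyp_sat lt mx R x y (HRxy S a b) = R S (predk a x) (predk b y)"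
| "hyp_sat lt mx R x y (HRyx S b a) = R S (predk b y) (predk a x)"

lemma hyp_holds_eq_hyp_sat: "hyp_holds w R x y h = hyp_sat (\<lambda>p. w ! (p - 1)) (\<lambda>p. p = length w) R x y h"
  by (cases h) auto

lemma hyp_sat_mono: "hyp_sat lt mx R x y h \<Longrightarrow> (\<And>S p q. R S p q \<Longrightarrow> R' S p q) \<Longrightarrow> hyp_sat lt mx R' x y h"
  by (cases h) auto

lemma hyp_sat_cong:
  assumes "\<And>S p q. 1 \<le> p \<Longrightarrow> p \<le> m \<Longrightarrow> 1 \<le> q \<Longrightarrow> q \<le> m \<Longrightarrow> R S p q = R' S p q"
    and "\<And>p. 1 \<le> p \<Longrightarrow> p \<le> m \<Longrightarrow> mx p = mx' p"
    and "1 \<le> x" "x \<le> m" "1 \<le> y" "y \<le> m"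
  shows "hyp_sat lt mx R x y h = hyp_sat lt mx' R' x y h"
proof -
  have "1 \<le> predk a z" "predk a z \<le> m" if "z = x \<or> z = y" for a z
    using that assms(3-6) by (auto simp: predk_def)
  moreover have "var_val v x y = x \<or> var_val v x y = y" for v
    by (cases v) (simp_all add: var_val_def)
  ultimately show ?thesis using assms(1,2) by (cases h) auto
qed

locale horn =
  fixes \<Phi> :: "'a horn_formula"
begin

definition heads :: "nat set" where
  "heads = {S. \<exists>cl \<in> set \<Phi>. snd cl = Some S}"

lemma finite_heads: "finite heads"
proof -
  have "heads \<subseteq> (\<lambda>cl. the (snd cl)) ` set \<Phi>" unfolding heads_def by force
  then show ?thesis by (rule finite_subset) simp
qed

definition is_model :: "(nat \<Rightarrow> 'a) \<Rightarrow> nat \<Rightarrow> (nat \<Rightarrow> bool) \<Rightarrow> (nat \<Rightarrow> nat \<Rightarrow> nat \<Rightarrow> bool) \<Rightarrow> bool" where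
  "is_model lt m mx R \<longleftrightarrow> (\<forall>x y cl S. 1 \<le> x \<longrightarrow> x \<le> m \<longrightarrow> 1 \<le> y \<longrightarrow> y \<le> m \<longrightarrow> cl \<in> set \<Phi> \<longrightarrow>
      snd cl = Some S \<longrightarrow> (\<forall>h \<in> set (fst cl). hyp_sat lt mx R x y h) \<longrightarrow> R S x y)"

definition least_model :: "(nat \<Rightarrow> 'a) \<Rightarrow> nat \<Rightarrow> (nat \<Rightarrow> bool) \<Rightarrow> nat \<Rightarrow> nat \<Rightarrow> nat \<Rightarrow> bool" where
  "least_model lt m mx S p q \<longleftrightarrow>
    1 \<le> p \<and> p \<le> m \<and> 1 \<le> q \<and> q \<le> m \<and> S \<in> heads \<and> (\<forall>R. is_model lt m mx R \<longrightarrow> R S p q)"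

definition goal_fires :: "(nat \<Rightarrow> 'a) \<Rightarrow> (nat \<Rightarrow> bool) \<Rightarrow> (nat \<Rightarrow> nat \<Rightarrow> nat \<Rightarrow> bool) \<Rightarrow> nat \<Rightarrow> nat \<Rightarrow> bool" where
  "goal_fires lt mx R x y \<longleftrightarrow> (\<exists>cl \<in> set \<Phi>. snd cl = None \<and> (\<forall>h \<in> set (fst cl). hyp_sat lt mx R x y h))"

lemma is_modelD:
  "is_model lt m mx R \<Longrightarrow> 1 \<le> x \<Longrightarrow> x \<le> m \<Longrightarrow> 1 \<le> y \<Longrightarrow> y \<le> m \<Longrightarrow> cl \<in> set \<Phi> \<Longrightarrow>
    snd cl = Some S \<Longrightarrow> \<forall>h \<in> set (fst cl). hyp_sat lt mx R x y h \<Longrightarrow> R S x y"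
  unfolding is_model_def by blast

lemma least_model_least: "is_model lt m mx R \<Longrightarrow> least_model lt m mx S p q \<Longrightarrow> R S p q"
  unfolding least_model_def by blast

lemma least_model_heads: "least_model lt m mx S p q \<Longrightarrow> S \<in> heads"
  unfolding least_model_def by blast

lemma is_model_least_model: "is_model lt m mx (least_model lt m mx)"
  unfolding is_model_def
proof (intro allI impI)
  fix x y cl S
  assume a: "1 \<le> x" "x \<le> m" "1 \<le> y" "y \<le> m" "cl \<in> set \<Phi>" "snd cl = Some S"
    and h: "\<forall>h \<in> set (fst cl). hyp_sat lt mx (least_model lt m mx) x y h"
  have "R S x y" if R: "is_model lt m mx R" for R
    using is_modelD[OF R a] h hyp_sat_mono least_model_least[OF R] by blast
  moreover have "S \<in> heads" using a unfolding heads_def by blast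
  ultimately show "least_model lt m mx S x y" using a unfolding least_model_def by blast
qed

lemma is_model_if_clauses_hold:
  assumes "\<forall>x \<in> {1..length w}. \<forall>y \<in> {1..length w}. \<forall>cl \<in> set \<Phi>. clause_holds w R x y cl"
  shows "is_model (\<lambda>p. w ! (p - 1)) (length w) (\<lambda>p. p = length w) R"
  using assms unfolding is_model_def clause_holds_def by (fastforce simp: hyp_holds_eq_hyp_sat)

lemma models_iff_no_goal_fires:
  "models w \<Phi> \<longleftrightarrow> \<not> (\<exists>x y. 1 \<le> x \<and> x \<le> length w \<and> 1 \<le> y \<and> y \<le> length w \<and>
    goal_fires (\<lambda>p. w ! (p - 1)) (\<lambda>p. p = length w)
      (least_model (\<lambda>p. w ! (p - 1)) (length w) (\<lambda>p. p = length w)) x y)"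
  (is "_ \<longleftrightarrow> \<not> (\<exists>x y. _ \<and> _ \<and> _ \<and> _ \<and> goal_fires ?lt ?mx ?M x y)")
proof
  assume "models w \<Phi>"
  then obtain R where R: "\<forall>x \<in> {1..length w}. \<forall>y \<in> {1..length w}. \<forall>cl \<in> set \<Phi>. clause_holds w R x y cl"
    unfolding models_def by blast
  have "hyp_sat ?lt ?mx R x y h" if "hyp_sat ?lt ?mx ?M x y h" for x y h
    using hyp_sat_mono[OF that] least_model_least[OF is_model_if_clauses_hold[OF R]] by blast
  then show "\<not> (\<exists>x y. 1 \<le> x \<and> x \<le> length w \<and> 1 \<le> y \<and> y \<le> length w \<and> goal_fires ?lt ?mx ?M x y)"
    using R unfolding goal_fires_def clause_holds_def by (fastforce simp: hyp_holds_eq_hyp_sat)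
next
  assume "\<not> (\<exists>x y. 1 \<le> x \<and> x \<le> length w \<and> 1 \<le> y \<and> y \<le> length w \<and> goal_fires ?lt ?mx ?M x y)"
  note no_goal_fires = this
  have "clause_holds w ?M x y cl" if "x \<in> {1..length w}" "y \<in> {1..length w}" "cl \<in> set \<Phi>" for x y cl
  proof (cases "snd cl")
    case None
    then have "\<not> (\<forall>h \<in> set (fst cl). hyp_sat ?lt ?mx ?M x y h)"
      using no_goal_fires that unfolding goal_fires_def by fastforce
    then show ?thesis using None by (simp add: clause_holds_def hyp_holds_eq_hyp_sat)
  next
    case (Some S)
    then show ?thesis using that is_modelD[OF is_model_least_model, of x "length w" y cl S]
      by (simp add: clause_holds_def hyp_holds_eq_hyp_sat)
  qed
  then show "models w \<Phi>" unfolding models_def by blast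
qed

text \<open>Every hypothesis looks at positions no larger than x and y, so the least model of a prefix
  is the restriction of the least model of the whole word.\<close>

context
  fixes lt :: "nat \<Rightarrow> 'a" and m m' :: nat and mx mx' :: "nat \<Rightarrow> bool"
  assumes prefix: "m' \<le> m" and mx_eq: "\<And>p. 1 \<le> p \<Longrightarrow> p \<le> m' \<Longrightarrow> mx p = mx' p"
begin

lemma least_model_prefix_imp: "least_model lt m' mx' S p q \<Longrightarrow> least_model lt m mx S p q"
proof -
  define M where "M S p q \<longleftrightarrow> p \<le> m' \<and> q \<le> m' \<and> least_model lt m mx S p q" for S p q
  have "is_model lt m' mx' M"
    unfolding is_model_def
  proof (intro allI impI)
    fix x y cl S
    assume a: "1 \<le> x" "x \<le> m'" "1 \<le> y" "y \<le> m'" "cl \<in> set \<Phi>" "snd cl = Some S"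
      and "\<forall>h \<in> set (fst cl). hyp_sat lt mx' M x y h"
    then have "\<forall>h \<in> set (fst cl). hyp_sat lt mx (least_model lt m mx) x y h"
      using hyp_sat_cong[of m' M "least_model lt m mx" mx' mx x y lt] mx_eq by (auto simp: M_def)
    then show "M S x y"
      using is_modelD[OF is_model_least_model _ _ _ _ a(5,6)] a prefix by (auto simp: M_def)
  qed
  then show "least_model lt m' mx' S p q \<Longrightarrow> least_model lt m mx S p q"
    using least_model_least M_def by blast
qed

lemma least_model_prefix:
  assumes "1 \<le> p" "p \<le> m'" "1 \<le> q" "q \<le> m'"
  shows "least_model lt m mx S p q = least_model lt m' mx' S p q"
proof
  define M where "M S p q \<longleftrightarrow>
    (if p \<le> m' \<and> q \<le> m' then least_model lt m' mx' S p q else least_model lt m mx S p q)"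
    for S p q
  have "is_model lt m mx M"
    unfolding is_model_def
  proof (intro allI impI)
    fix x y cl S
    assume a: "1 \<le> x" "x \<le> m" "1 \<le> y" "y \<le> m" "cl \<in> set \<Phi>" "snd cl = Some S"
      and h: "\<forall>h \<in> set (fst cl). hyp_sat lt mx M x y h"
    show "M S x y"
    proof (cases "x \<le> m' \<and> y \<le> m'")
      case True
      then have "\<forall>h \<in> set (fst cl). hyp_sat lt mx' (least_model lt m' mx') x y h"
        using h hyp_sat_cong[of m' M "least_model lt m' mx'" mx mx' x y lt] mx_eq a
        by (auto simp: M_def)
      then show ?thesis
        using is_modelD[OF is_model_least_model _ _ _ _ a(5,6)] a True by (simp add: M_def)
    next
      case False
      have "M S' p' q' \<Longrightarrow> least_model lt m mx S' p' q'" for S' p' q'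
        using least_model_prefix_imp by (auto simp: M_def split: if_splits)
      then have "\<forall>h \<in> set (fst cl). hyp_sat lt mx (least_model lt m mx) x y h"
        using h hyp_sat_mono by blast
      then have "least_model lt m mx S x y" using is_modelD[OF is_model_least_model a] by blast
      then show ?thesis using False unfolding M_def by auto
    qed
  qed
  then show "least_model lt m mx S p q \<Longrightarrow> least_model lt m' mx' S p q"
    using least_model_least assms by (fastforce simp: M_def)
qed (rule least_model_prefix_imp)

lemma goal_fires_prefix:
  assumes "1 \<le> p" "p \<le> m'" "1 \<le> q" "q \<le> m'"
  shows "goal_fires lt mx (least_model lt m mx) p q = goal_fires lt mx' (least_model lt m' mx') p q"
proof -
  have "hyp_sat lt mx (least_model lt m mx) p q h = hyp_sat lt mx' (least_model lt m' mx') p q h" for h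
    by (rule hyp_sat_cong[of m']) (use least_model_prefix mx_eq assms in auto)
  then show ?thesis unfolding goal_fires_def by simp
qed

end

end

section \<open>Horn formulas as grid recurrences\<close>

fun hyp_offset :: "'a hyp \<Rightarrow> nat" where
  "hyp_offset (HQ s v a) = a"
| "hyp_offset (HMin p v a) = a"
| "hyp_offset (HMax p v a) = a"
| "hyp_offset (HRxy S a b) = max a b"
| "hyp_offset (HRyx S b a) = max a b"

datatype 'a summary = Summary
  (sum_facts: "(nat \<times> nat \<times> nat \<times> bool) set") (sum_letters_x: "'a list") (sum_letters_y: "'a list")
  (sum_cap_x: nat) (sum_cap_y: nat) (sum_failed: bool)

text \<open>Evaluation of a hypothesis of a clause instantiated at (x, y), or at (y, x) if ob, from local
  data only: the letters lx ! i at x - i and ly ! j at y - j, the coordinates x and y capped to cx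
  and cy, whether y \<le> x, the flag b telling whether y is max, and a lookup window i j S ob' for the
  fact S at (x - i, y - j), or at (y - j, x - i) if ob'.\<close>

fun hyp_sat_window :: "bool \<Rightarrow> bool \<Rightarrow> 'a list \<Rightarrow> 'a list \<Rightarrow> nat \<Rightarrow> nat
    \<Rightarrow> (nat \<Rightarrow> nat \<Rightarrow> nat \<Rightarrow> bool \<Rightarrow> bool) \<Rightarrow> bool \<Rightarrow> 'a hyp \<Rightarrow> bool" where
  "hyp_sat_window b y_le_x lx ly cx cy window ob (HQ s v a) =
    ((if (v = VX) \<noteq> ob then lx else ly) ! a = s)"
| "hyp_sat_window b y_le_x lx ly cx cy window ob (HMin p v a) =
    (((if (v = VX) \<noteq> ob then cx else cy) \<le> a + 1) = p)"
| "hyp_sat_window b y_le_x lx ly cx cy window ob (HMax p v a) =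
    ((b \<and> (if (v = VX) \<noteq> ob then y_le_x \<and> (a = 0 \<or> cy = 1) else a = 0 \<or> cy = 1)) = p)"
| "hyp_sat_window b y_le_x lx ly cx cy window ob (HRxy S a a') =
    (if ob then window a' a S True else window a a' S False)"
| "hyp_sat_window b y_le_x lx ly cx cy window ob (HRyx S a' a) =
    (if ob then window a' a S False else window a a' S True)"

lemma hyp_sat_window_mono:
  "hyp_sat_window b y_le_x lx ly cx cy window ob h \<Longrightarrow> (\<And>i j S ob. window i j S ob \<Longrightarrow> window' i j S ob)
    \<Longrightarrow> hyp_sat_window b y_le_x lx ly cx cy window' ob h"
  by (cases h) (auto split: if_splits)

context horn
begin

abbreviation max_at :: "nat \<Rightarrow> bool \<Rightarrow> nat \<Rightarrow> bool" where
  "max_at y b \<equiv> \<lambda>p. b \<and> p = y"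

abbreviation prefix_model :: "(nat \<Rightarrow> 'a) \<Rightarrow> nat \<Rightarrow> bool \<Rightarrow> nat \<Rightarrow> nat \<Rightarrow> nat \<Rightarrow> bool" where
  "prefix_model lt y b \<equiv> least_model lt y (max_at y b)"

abbreviation prefix_fires :: "(nat \<Rightarrow> 'a) \<Rightarrow> nat \<Rightarrow> bool \<Rightarrow> nat \<Rightarrow> nat \<Rightarrow> bool" where
  "prefix_fires lt y b \<equiv> goal_fires lt (max_at y b) (prefix_model lt y b)"

definition prefix_fails :: "(nat \<Rightarrow> 'a) \<Rightarrow> nat \<Rightarrow> bool \<Rightarrow> nat \<Rightarrow> bool" where
  "prefix_fails lt y b x \<longleftrightarrow>
    (\<exists>p q. 1 \<le> p \<and> p \<le> q \<and> p \<le> x \<and> q \<le> y \<and> (prefix_fires lt y b p q \<or> prefix_fires lt y b q p))"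

lemma prefix_model_down:
  "1 \<le> p \<Longrightarrow> p < y \<Longrightarrow> 1 \<le> q \<Longrightarrow> q < y \<Longrightarrow> prefix_model lt y b S p q = prefix_model lt (y - 1) False S p q"
  by (rule least_model_prefix) auto

lemma prefix_fires_down:
  "1 \<le> p \<Longrightarrow> p < y \<Longrightarrow> 1 \<le> q \<Longrightarrow> q < y \<Longrightarrow> prefix_fires lt y b p q = prefix_fires lt (y - 1) False p q"
  by (rule goal_fires_prefix) auto

lemma prefix_fails_step:
  assumes "1 \<le> x" "x \<le> y"
  shows "prefix_fails lt y b x \<longleftrightarrow> prefix_fires lt y b x y \<or> prefix_fires lt y b y x \<or>
    (2 \<le> x \<and> prefix_fails lt y b (x - 1)) \<or> (x < y \<and> prefix_fails lt (y - 1) False x)"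
proof
  assume "prefix_fails lt y b x"
  then obtain p q where pq: "1 \<le> p" "p \<le> q" "p \<le> x" "q \<le> y"
    "prefix_fires lt y b p q \<or> prefix_fires lt y b q p"
    unfolding prefix_fails_def by blast
  consider "p < x" | "p = x" "q = y" | "p = x" "q < y" using pq by linarith
  then show "prefix_fires lt y b x y \<or> prefix_fires lt y b y x \<or>
    (2 \<le> x \<and> prefix_fails lt y b (x - 1)) \<or> (x < y \<and> prefix_fails lt (y - 1) False x)"
  proof cases
    case 1
    then have "prefix_fails lt y b (x - 1)"
      unfolding prefix_fails_def using pq by (intro exI[of _ p] exI[of _ q]) auto
    then show ?thesis using 1 pq by auto
  next
    case 3
    then have "prefix_fires lt (y - 1) False p q \<or> prefix_fires lt (y - 1) False q p"
      using pq prefix_fires_down by auto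
    then have "prefix_fails lt (y - 1) False x"
      unfolding prefix_fails_def using 3 pq by (intro exI[of _ p] exI[of _ q]) auto
    then show ?thesis using 3 pq by auto
  qed (use pq in auto)
next
  assume "prefix_fires lt y b x y \<or> prefix_fires lt y b y x \<or>
    (2 \<le> x \<and> prefix_fails lt y b (x - 1)) \<or> (x < y \<and> prefix_fails lt (y - 1) False x)"
  then show "prefix_fails lt y b x"
  proof (elim disjE conjE)
    assume "x < y" "prefix_fails lt (y - 1) False x"
    then obtain p q where pq: "1 \<le> p" "p \<le> q" "p \<le> x" "q \<le> y - 1"
      "prefix_fires lt (y - 1) False p q \<or> prefix_fires lt (y - 1) False q p"
      unfolding prefix_fails_def by blast
    then have "prefix_fires lt y b p q \<or> prefix_fires lt y b q p"
      using prefix_fires_down[of p y q lt b] prefix_fires_down[of q y p lt b] by auto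
    then show ?thesis unfolding prefix_fails_def using pq by (intro exI[of _ p] exI[of _ q]) auto
  next
    assume "prefix_fails lt y b (x - 1)"
    then show ?thesis unfolding prefix_fails_def by (meson diff_le_self order_trans)
  qed (use assms in \<open>auto simp: prefix_fails_def\<close>)
qed

definition max_offset :: nat where
  "max_offset = Max (insert 0 (hyp_offset ` (\<Union>cl \<in> set \<Phi>. set (fst cl))))"

lemma hyp_offset_le_max_offset: "cl \<in> set \<Phi> \<Longrightarrow> h \<in> set (fst cl) \<Longrightarrow> hyp_offset h \<le> max_offset"
  unfolding max_offset_def by (rule Max_ge) auto

text \<open>The summary of the point (x, y) of the grid, for the prefix [1, y] with max at y iff b.
  Capping x and y at max_offset + 2 loses nothing, since min is only ever tested at x - a and
  y - a with a \<le> max_offset.\<close>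

definition summary_at :: "(nat \<Rightarrow> 'a) \<Rightarrow> nat \<Rightarrow> bool \<Rightarrow> nat \<Rightarrow> 'a summary" where
  "summary_at lt y b x = Summary
    {(i, j, S, ob). i \<le> max_offset \<and> j \<le> max_offset \<and> S \<in> heads \<and>
      (if ob then prefix_model lt y b S (predk j y) (predk i x)
       else prefix_model lt y b S (predk i x) (predk j y))}
    (map (\<lambda>i. lt (predk i x)) [0..<Suc max_offset]) (map (\<lambda>j. lt (predk j y)) [0..<Suc max_offset])
    (min x (max_offset + 2)) (min y (max_offset + 2)) (prefix_fails lt y b x)"

definition step_cap_x :: "bool \<Rightarrow> 'a summary \<Rightarrow> nat" where
  "step_cap_x x_le_1 left = (if x_le_1 then 1 else min (sum_cap_x left + 1) (max_offset + 2))"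

definition step_cap_y :: "bool \<Rightarrow> bool \<Rightarrow> 'a summary \<Rightarrow> 'a summary \<Rightarrow> nat" where
  "step_cap_y x_le_1 y_le_x left down =
    (if y_le_x then step_cap_x x_le_1 left else min (sum_cap_y down + 1) (max_offset + 2))"

definition step_letters_x :: "bool \<Rightarrow> 'a \<Rightarrow> 'a summary \<Rightarrow> 'a list" where
  "step_letters_x x_le_1 a left = (if x_le_1 then replicate (Suc max_offset) a
    else a # take max_offset (sum_letters_x left @ replicate max_offset a))"

definition step_letters_y :: "bool \<Rightarrow> bool \<Rightarrow> 'a \<Rightarrow> 'a \<Rightarrow> 'a summary \<Rightarrow> 'a summary \<Rightarrow> 'a list" where
  "step_letters_y x_le_1 y_le_x a c left down = (if y_le_x then step_letters_x x_le_1 a left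
    else c # take max_offset (sum_letters_y down @ replicate max_offset c))"

definition at_current :: "bool \<Rightarrow> nat \<Rightarrow> nat \<Rightarrow> nat \<Rightarrow> bool" where
  "at_current x_le_1 cy i j \<longleftrightarrow> (i = 0 \<or> x_le_1) \<and> (j = 0 \<or> cy = 1)"

text \<open>Facts away from the current point are inherited: with i shifted by one from the left
  neighbour (x - 1, y), otherwise from the lower neighbour (x, y - 1) with j shifted by one; on the
  diagonal x = y there is no lower neighbour, and (x, y - j) is (y, x - j) read from the left
  neighbour with the orientation flipped.\<close>

definition inherited_fact :: "bool \<Rightarrow> bool \<Rightarrow> 'a summary \<Rightarrow> 'a summary \<Rightarrow> nat \<Rightarrow> nat \<Rightarrow> nat \<Rightarrow> bool \<Rightarrow> bool"
  where
  "inherited_fact x_le_1 y_le_x left down i j S ob =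
    (if 1 \<le> i \<and> \<not> x_le_1 then (i - 1, j, S, ob) \<in> sum_facts left
     else if \<not> y_le_x then (i, j - 1, S, ob) \<in> sum_facts down
     else (j - 1, 0, S, \<not> ob) \<in> sum_facts left)"

definition window_fact :: "bool \<Rightarrow> nat \<Rightarrow> (nat \<Rightarrow> nat \<Rightarrow> nat \<Rightarrow> bool \<Rightarrow> bool) \<Rightarrow> (nat \<times> bool) set
    \<Rightarrow> nat \<Rightarrow> nat \<Rightarrow> nat \<Rightarrow> bool \<Rightarrow> bool" where
  "window_fact x_le_1 cy inherited X i j S ob =
    (if at_current x_le_1 cy i j then (S, ob) \<in> X else inherited i j S ob)"

text \<open>One round of the clauses instantiated at the current point: (S, False) stands for S(x, y)
  and (S, True) for S(y, x); on the diagonal the two are the same fact.\<close>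

definition consequences :: "bool \<Rightarrow> bool \<Rightarrow> 'a list \<Rightarrow> 'a list \<Rightarrow> nat \<Rightarrow> nat
    \<Rightarrow> ((nat \<times> bool) set \<Rightarrow> nat \<Rightarrow> nat \<Rightarrow> nat \<Rightarrow> bool \<Rightarrow> bool) \<Rightarrow> (nat \<times> bool) set \<Rightarrow> (nat \<times> bool) set"
  where
  "consequences b y_le_x lx ly cx cy window X = {(S, ob). \<exists>ob'. (ob' = ob \<or> y_le_x) \<and>
    (\<exists>cl \<in> set \<Phi>. snd cl = Some S \<and>
      (\<forall>h \<in> set (fst cl). hyp_sat_window b y_le_x lx ly cx cy (window X) ob' h))}"

definition summary_step :: "bool \<Rightarrow> bool \<Rightarrow> bool \<Rightarrow> 'a \<Rightarrow> 'a \<Rightarrow> 'a summary \<Rightarrow> 'a summary \<Rightarrow> 'a summary" where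
  "summary_step x_le_1 y_le_x b a c left down =
    (let cx = step_cap_x x_le_1 left; cy = step_cap_y x_le_1 y_le_x left down;
         lx = step_letters_x x_le_1 a left; ly = step_letters_y x_le_1 y_le_x a c left down;
         window = window_fact x_le_1 cy (inherited_fact x_le_1 y_le_x left down);
         X = lfp (consequences b y_le_x lx ly cx cy window);
         fires = (\<lambda>ob. \<exists>cl \<in> set \<Phi>. snd cl = None \<and>
           (\<forall>h \<in> set (fst cl). hyp_sat_window b y_le_x lx ly cx cy (window X) ob h))
     in Summary {(i, j, S, ob). i \<le> max_offset \<and> j \<le> max_offset \<and> S \<in> heads \<and> window X i j S ob}
          lx ly cx cy (fires False \<or> fires True \<or>
            (\<not> x_le_1 \<and> sum_failed left) \<or> (\<not> y_le_x \<and> sum_failed down)))"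

lemma mono_consequences: "mono (consequences b y_le_x lx ly cx cy (window_fact x_le_1 cy inherited))"
proof (rule monoI, rule subsetI)
  fix X Y :: "(nat \<times> bool) set" and z
  assume "X \<subseteq> Y"
  then have window:
    "window_fact x_le_1 cy inherited X i j S ob \<Longrightarrow> window_fact x_le_1 cy inherited Y i j S ob"
    for i j S ob
    unfolding window_fact_def by (auto split: if_splits)
  assume "z \<in> consequences b y_le_x lx ly cx cy (window_fact x_le_1 cy inherited) X"
  then obtain S ob ob' cl where z: "z = (S, ob)" "ob' = ob \<or> y_le_x" "cl \<in> set \<Phi>" "snd cl = Some S"
    "\<forall>h \<in> set (fst cl). hyp_sat_window b y_le_x lx ly cx cy (window_fact x_le_1 cy inherited X) ob' h"
    unfolding consequences_def by blast
  have "\<forall>h \<in> set (fst cl).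
      hyp_sat_window b y_le_x lx ly cx cy (window_fact x_le_1 cy inherited Y) ob' h"
    using z(5) hyp_sat_window_mono[where window' = "window_fact x_le_1 cy inherited Y"] window by blast
  then show "z \<in> consequences b y_le_x lx ly cx cy (window_fact x_le_1 cy inherited) Y"
    unfolding consequences_def using z by blast
qed

end

text \<open>Every
  hypothesis of a clause instantiated at (x, y) or (y, x) refers to points (x - i, y - j) or
  (y - j, x - i) with i, j \<le> max_offset; apart from (x, y) and (y, x) themselves these lie in the
  window of the left or the lower neighbour, so the facts at the current point are the least
  fixed point of the clauses instantiated there.\<close>

locale horn_point = horn \<Phi> for \<Phi> :: "'a horn_formula" +
  fixes lt :: "nat \<Rightarrow> 'a" and y :: nat and b :: bool and x :: nat and left down :: "'a summary"
  assumes x_pos: "1 \<le> x" and x_le_y: "x \<le> y"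
    and left: "2 \<le> x \<Longrightarrow> left = summary_at lt y b (x - 1)"
    and down: "x < y \<Longrightarrow> down = summary_at lt (y - 1) False x"
begin

abbreviation "M \<equiv> prefix_model lt y b"
abbreviation "cx \<equiv> step_cap_x (x \<le> 1) left"
abbreviation "cy \<equiv> step_cap_y (x \<le> 1) (y \<le> x) left down"
abbreviation "lx \<equiv> step_letters_x (x \<le> 1) (lt x) left"
abbreviation "ly \<equiv> step_letters_y (x \<le> 1) (y \<le> x) (lt x) (lt y) left down"
abbreviation "inherited \<equiv> inherited_fact (x \<le> 1) (y \<le> x) left down"
abbreviation "window \<equiv> window_fact (x \<le> 1) cy inherited"
abbreviation "T \<equiv> consequences b (y \<le> x) lx ly cx cy window"

lemma cap_x_eq: "cx = min x (max_offset + 2)"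
  using x_pos left by (cases "x \<le> 1") (auto simp: step_cap_x_def summary_at_def)

lemma cap_y_eq: "cy = min y (max_offset + 2)"
  using x_pos x_le_y down cap_x_eq by (cases "y \<le> x") (auto simp: step_cap_y_def summary_at_def)

lemma letters_x_nth: "i \<le> max_offset \<Longrightarrow> lx ! i = lt (predk i x)"
proof (cases "x \<le> 1")
  case True
  then show "i \<le> max_offset \<Longrightarrow> ?thesis" using x_pos by (simp add: step_letters_x_def predk_def nth_Cons')
next
  case False
  assume i: "i \<le> max_offset"
  show ?thesis
  proof (cases i)
    case 0
    then show ?thesis using False by (simp add: step_letters_x_def predk_def)
  next
    case (Suc i')
    have "sum_letters_x left ! i' = lt (predk i' (x - 1))"
      using left False i Suc by (simp add: summary_at_def nth_append)
    moreover have "predk i' (x - 1) = predk i x" using Suc False by (simp add: predk_def)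
    ultimately show ?thesis
      using False i Suc by (simp add: step_letters_x_def nth_append left summary_at_def)
  qed
qed

lemma letters_y_nth: "j \<le> max_offset \<Longrightarrow> ly ! j = lt (predk j y)"
proof (cases "y \<le> x")
  case True
  then show "j \<le> max_offset \<Longrightarrow> ?thesis" using x_le_y letters_x_nth by (simp add: step_letters_y_def)
next
  case False
  assume j: "j \<le> max_offset"
  show ?thesis
  proof (cases j)
    case 0
    then show ?thesis using False x_pos by (simp add: step_letters_y_def predk_def)
  next
    case (Suc j')
    have "sum_letters_y down ! j' = lt (predk j' (y - 1))"
      using down False j Suc by (simp add: summary_at_def nth_append)
    moreover have "predk j' (y - 1) = predk j y" using Suc False by (simp add: predk_def)
    ultimately show ?thesis
      using False j Suc by (simp add: step_letters_y_def nth_append down summary_at_def)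
  qed
qed

lemma letters_x_eq: "lx = map (\<lambda>i. lt (predk i x)) [0..<Suc max_offset]"
proof (rule nth_equalityI)
  show "length lx = length (map (\<lambda>i. lt (predk i x)) [0..<Suc max_offset])"
    by (simp add: step_letters_x_def min_def)
  fix i
  assume "i < length lx"
  then have "i \<le> max_offset" by (simp add: step_letters_x_def split: if_splits)
  then show "lx ! i = map (\<lambda>i. lt (predk i x)) [0..<Suc max_offset] ! i"
    using letters_x_nth by (simp del: upt_Suc)
qed

lemma letters_y_eq: "ly = map (\<lambda>j. lt (predk j y)) [0..<Suc max_offset]"
proof (rule nth_equalityI)
  show "length ly = length (map (\<lambda>j. lt (predk j y)) [0..<Suc max_offset])"
    by (simp add: step_letters_y_def step_letters_x_def min_def)
  fix j
  assume "j < length ly"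
  then have "j \<le> max_offset" by (simp add: step_letters_y_def step_letters_x_def split: if_splits)
  then show "ly ! j = map (\<lambda>j. lt (predk j y)) [0..<Suc max_offset] ! j"
    using letters_y_nth by (simp del: upt_Suc)
qed

lemma at_current_iff: "at_current (x \<le> 1) cy i j \<longleftrightarrow> predk i x = x \<and> predk j y = y"
  using x_pos x_le_y cap_y_eq predk_eq_self_iff[of x i] predk_eq_self_iff[of y j]
  unfolding at_current_def by auto

lemma inherited_fact_iff:
  assumes ij: "i \<le> max_offset" "j \<le> max_offset" and not_current: "\<not> at_current (x \<le> 1) cy i j"
  shows "inherited i j S ob \<longleftrightarrow>
    S \<in> heads \<and> (if ob then M S (predk j y) (predk i x) else M S (predk i x) (predk j y))"
proof (cases "1 \<le> i \<and> \<not> x \<le> 1")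
  case True
  then have "left = summary_at lt y b (x - 1)" "predk (i - 1) (x - 1) = predk i x"
    using left predk_diff_1[of i x] by auto
  then show ?thesis using True ij unfolding inherited_fact_def summary_at_def by auto
next
  case False
  then have i: "predk i x = x" using x_pos by (auto simp: predk_def)
  then have "j \<noteq> 0" "y \<noteq> 1"
    using not_current x_pos x_le_y predk_eq_self_iff[of y j] at_current_iff by auto
  then have y: "2 \<le> y" "1 \<le> predk j y" "predk j y < y" "predk (j - 1) (y - 1) = predk j y"
    using x_pos x_le_y by (auto simp: predk_def)
  have "j - 1 \<le> max_offset" using ij by auto
  show ?thesis
  proof (cases "y \<le> x")
    case False
    then have "down = summary_at lt (y - 1) False x" "x < y" using down x_le_y by auto
    then show ?thesis unfolding inherited_fact_def
      using \<open>\<not> (1 \<le> i \<and> \<not> x \<le> 1)\<close> False ij i y x_pos prefix_model_down[of x y "predk j y"]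
        prefix_model_down[of "predk j y" y x]
      by (auto simp: summary_at_def)
  next
    case True
    then have "x = y" using x_le_y by auto
    then have "left = summary_at lt y b (x - 1)" "i = 0" using left y \<open>\<not> (1 \<le> i \<and> \<not> x \<le> 1)\<close> by auto
    then show ?thesis unfolding inherited_fact_def
      using True \<open>x = y\<close> \<open>j - 1 \<le> max_offset\<close> ij y by (auto simp: summary_at_def)
  qed
qed

definition current_point :: "bool \<Rightarrow> nat \<times> nat" where
  "current_point ob = (if ob then (y, x) else (x, y))"

definition with_current :: "(nat \<times> bool) set \<Rightarrow> nat \<Rightarrow> nat \<Rightarrow> nat \<Rightarrow> bool" where
  "with_current X S p q =
    (if (p, q) = (x, y) then (S, False) \<in> X else if (p, q) = (y, x) then (S, True) \<in> X else M S p q)"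

definition current_sym :: "(nat \<times> bool) set \<Rightarrow> bool" where
  "current_sym X \<longleftrightarrow> (y \<le> x \<longrightarrow> (\<forall>S. (S, True) \<in> X \<longleftrightarrow> (S, False) \<in> X))"

definition current_facts :: "(nat \<times> bool) set" where
  "current_facts = {(S, ob). S \<in> heads \<and> M S (fst (current_point ob)) (snd (current_point ob))}"

lemma current_point_range:
  "1 \<le> fst (current_point ob) \<and> fst (current_point ob) \<le> y \<and>
    1 \<le> snd (current_point ob) \<and> snd (current_point ob) \<le> y"
  using x_pos x_le_y by (auto simp: current_point_def)

lemma current_point_cases: "current_point ob = current_point ob' \<or> ob = ob' \<or> \<not> y \<le> x"
  using x_le_y by (auto simp: current_point_def)

lemma with_current_point:
  assumes "current_sym X"
  shows "with_current X S (fst (current_point ob)) (snd (current_point ob)) \<longleftrightarrow> (S, ob) \<in> X"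
proof (cases ob)
  case False
  then show ?thesis by (simp add: current_point_def with_current_def)
next
  case True
  show ?thesis
  proof (cases "x = y")
    case True
    then show ?thesis
      using assms \<open>ob\<close> unfolding current_point_def with_current_def current_sym_def by simp
  next
    case False
    then show ?thesis using \<open>ob\<close> by (simp add: current_point_def with_current_def)
  qed
qed

lemma current_sym_current_facts: "current_sym current_facts"
  unfolding current_sym_def current_facts_def current_point_def using x_le_y by auto

lemma with_current_other:
  assumes "(p, q) \<noteq> current_point False" "(p, q) \<noteq> current_point True"
  shows "with_current X S p q = M S p q"
proof -
  have "(p, q) \<noteq> (x, y)" "(p, q) \<noteq> (y, x)" using assms unfolding current_point_def by simp_all
  then show ?thesis unfolding with_current_def by (simp only: if_not_P if_False)
qed

lemma with_current_mono:
  assumes "X \<subseteq> Y" "with_current X S p q"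
  shows "with_current Y S p q"
proof (cases "(p, q) = (x, y)")
  case True
  then show ?thesis using assms unfolding with_current_def if_P[OF True] by blast
next
  case False
  then show ?thesis
  proof (cases "(p, q) = (y, x)")
    case True
    then show ?thesis using assms unfolding with_current_def if_not_P[OF False] if_P[OF True] by blast
  next
    case False2: False
    then show ?thesis
      using assms unfolding with_current_def if_not_P[OF False] if_not_P[OF False2] by blast
  qed
qed

lemma with_current_current_facts: "with_current current_facts = M"
proof (intro ext)
  fix S p q
  have facts: "(S, ob) \<in> current_facts \<longleftrightarrow> M S (fst (current_point ob)) (snd (current_point ob))" for ob
    using least_model_heads unfolding current_facts_def by blast
  show "with_current current_facts S p q = M S p q"
  proof (cases "(p, q) = current_point False \<or> (p, q) = current_point True")
    case True
    then show ?thesis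
      using facts with_current_point[OF current_sym_current_facts] by (metis fst_conv snd_conv)
  next
    case False
    then show ?thesis using with_current_other by blast
  qed
qed

lemma current_sym_consequences: "current_sym (T X)"
  unfolding current_sym_def consequences_def by simp

lemma window_eq:
  assumes "i \<le> max_offset" "j \<le> max_offset" "current_sym X"
  shows "window X i j S ob =
    (if ob then with_current X S (predk j y) (predk i x) else with_current X S (predk i x) (predk j y))"
proof (cases "at_current (x \<le> 1) cy i j")
  case True
  then have "predk i x = x" "predk j y = y" using at_current_iff by auto
  moreover have "with_current X S x y \<longleftrightarrow> (S, False) \<in> X" "with_current X S y x \<longleftrightarrow> (S, True) \<in> X"
    using with_current_point[OF assms(3), of S False] with_current_point[OF assms(3), of S True]
    by (simp_all add: current_point_def)
  ultimately show ?thesis using True unfolding window_fact_def by simp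
next
  case False
  then have "(predk i x, predk j y) \<noteq> current_point ob'" "(predk j y, predk i x) \<noteq> current_point ob'"
    for ob'
    using at_current_iff predk_le_max[of i x] predk_le_max[of j y] x_pos x_le_y
    by (auto simp: current_point_def)
  then show ?thesis using False inherited_fact_iff[OF assms(1,2) False] least_model_heads
    unfolding window_fact_def by (cases ob) (auto simp: with_current_other)
qed

lemma hyp_sat_window_eq:
  assumes "hyp_offset h \<le> max_offset" and "current_sym X"
  shows "hyp_sat_window b (y \<le> x) lx ly cx cy (window X) ob h =
    hyp_sat lt (max_at y b) (with_current X) (fst (current_point ob)) (snd (current_point ob)) h"
proof (cases h)
  case (HQ s v a)
  then show ?thesis using assms letters_x_nth[of a] letters_y_nth[of a]
    by (cases v; cases ob) (auto simp: current_point_def var_val_def)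
next
  case (HMin p v a)
  then have "(min x (max_offset + 2) \<le> a + 1) = (predk a x = 1)"
    "(min y (max_offset + 2) \<le> a + 1) = (predk a y = 1)"
    using assms unfolding predk_eq_1_iff by auto
  then show ?thesis
    using HMin cap_x_eq cap_y_eq by (cases v; cases ob) (auto simp: current_point_def var_val_def)
next
  case (HMax p v a)
  have "predk a y = y \<longleftrightarrow> a = 0 \<or> y = 1" "predk a x = y \<longleftrightarrow> y \<le> x \<and> (a = 0 \<or> y = 1)"
    "min y (max_offset + 2) = 1 \<longleftrightarrow> y = 1"
    using predk_eq_self_iff[of y a] x_pos x_le_y by (auto simp: predk_def)
  then show ?thesis
    using HMax cap_y_eq by (cases v; cases ob) (auto simp: current_point_def var_val_def)
next
  case (HRxy S a a')
  then show ?thesis using assms window_eq[of a a' X S] window_eq[of a' a X S]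
    by (cases ob) (simp_all add: current_point_def)
next
  case (HRyx S a' a)
  then show ?thesis using assms window_eq[of a a' X S] window_eq[of a' a X S]
    by (cases ob) (simp_all add: current_point_def)
qed

lemma hyp_sat_window_clause:
  "cl \<in> set \<Phi> \<Longrightarrow> current_sym X \<Longrightarrow>
    (\<forall>h \<in> set (fst cl). hyp_sat_window b (y \<le> x) lx ly cx cy (window X) ob h) \<longleftrightarrow>
    (\<forall>h \<in> set (fst cl).
      hyp_sat lt (max_at y b) (with_current X) (fst (current_point ob)) (snd (current_point ob)) h)"
  using hyp_sat_window_eq hyp_offset_le_max_offset by blast

lemma lfp_subset_current_facts: "lfp T \<subseteq> current_facts"
proof (rule lfp_lowerbound, rule subsetI)
  fix z
  assume "z \<in> T current_facts"
  then obtain S ob ob' cl where z: "z = (S, ob)" "ob' = ob \<or> y \<le> x" "cl \<in> set \<Phi>" "snd cl = Some S"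
    "\<forall>h \<in> set (fst cl). hyp_sat_window b (y \<le> x) lx ly cx cy (window current_facts) ob' h"
    unfolding consequences_def by blast
  then have
    "\<forall>h \<in> set (fst cl). hyp_sat lt (max_at y b) M (fst (current_point ob')) (snd (current_point ob')) h"
    using hyp_sat_window_clause[OF z(3) current_sym_current_facts, of ob'] with_current_current_facts
    by simp
  then have "M S (fst (current_point ob')) (snd (current_point ob'))"
    using is_modelD[OF is_model_least_model _ _ _ _ z(3,4)] current_point_range by blast
  moreover have "current_point ob' = current_point ob" using current_point_cases[of ob' ob] z(2) by auto
  moreover have "S \<in> heads" using z(3,4) unfolding heads_def by blast
  ultimately show "z \<in> current_facts" using z(1) unfolding current_facts_def by auto
qed

lemma is_model_with_current_fixpoint:
  assumes fixpoint: "T X = X" and sub: "X \<subseteq> current_facts"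
  shows "is_model lt y (max_at y b) (with_current X)"
  unfolding is_model_def
proof (intro allI impI)
  fix p q cl S
  assume pq: "1 \<le> p" "p \<le> y" "1 \<le> q" "q \<le> y" and cl: "cl \<in> set \<Phi>" "snd cl = Some S"
    and hyps: "\<forall>h \<in> set (fst cl). hyp_sat lt (max_at y b) (with_current X) p q h"
  have sym: "current_sym X" using current_sym_consequences[of X] fixpoint by simp
  show "with_current X S p q"
  proof (cases "\<exists>ob. (p, q) = current_point ob")
    case True
    then obtain ob where ob: "p = fst (current_point ob)" "q = snd (current_point ob)"
      by (metis fst_conv snd_conv)
    then have "(S, ob) \<in> T X"
      using hyps hyp_sat_window_clause[OF cl(1) sym, of ob] cl unfolding consequences_def by blast
    then show ?thesis using fixpoint with_current_point[OF sym, of S ob] ob by simp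
  next
    case False
    have "with_current X S' p' q' \<Longrightarrow> M S' p' q'" for S' p' q'
      using with_current_mono[OF sub] with_current_current_facts by metis
    then have "\<forall>h \<in> set (fst cl). hyp_sat lt (max_at y b) M p q h"
      using hyps hyp_sat_mono by blast
    then show ?thesis
      using is_modelD[OF is_model_least_model pq cl] with_current_other False by metis
  qed
qed

lemma lfp_eq_current_facts: "lfp T = current_facts"
proof
  show "lfp T \<subseteq> current_facts" by (rule lfp_subset_current_facts)
  have fixpoint: "T (lfp T) = lfp T" using lfp_unfold[OF mono_consequences] by simp
  then have model: "is_model lt y (max_at y b) (with_current (lfp T))"
    using is_model_with_current_fixpoint lfp_subset_current_facts by blast
  have sym: "current_sym (lfp T)" using current_sym_consequences fixpoint by metis
  show "current_facts \<subseteq> lfp T"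
  proof
    fix z
    assume "z \<in> current_facts"
    then obtain S ob where z: "z = (S, ob)" "M S (fst (current_point ob)) (snd (current_point ob))"
      unfolding current_facts_def by blast
    then have "with_current (lfp T) S (fst (current_point ob)) (snd (current_point ob))"
      using least_model_least[OF model] by blast
    then show "z \<in> lfp T" using with_current_point[OF sym] z(1) by simp
  qed
qed

lemma goal_fires_window:
  "(\<exists>cl \<in> set \<Phi>. snd cl = None \<and>
      (\<forall>h \<in> set (fst cl). hyp_sat_window b (y \<le> x) lx ly cx cy (window current_facts) ob h)) \<longleftrightarrow>
    goal_fires lt (max_at y b) M (fst (current_point ob)) (snd (current_point ob))"
  unfolding goal_fires_def
  using hyp_sat_window_clause[OF _ current_sym_current_facts, of _ ob] with_current_current_facts
  by simp

lemma facts_eq: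
  "{(i, j, S, ob). i \<le> max_offset \<and> j \<le> max_offset \<and> S \<in> heads \<and> window current_facts i j S ob} =
   {(i, j, S, ob). i \<le> max_offset \<and> j \<le> max_offset \<and> S \<in> heads \<and>
      (if ob then M S (predk j y) (predk i x) else M S (predk i x) (predk j y))}"
  using window_eq[OF _ _ current_sym_current_facts] with_current_current_facts by auto

lemma summary_at_step: "summary_at lt y b x = summary_step (x \<le> 1) (y \<le> x) b (lt x) (lt y) left down"
proof -
  have failed: "prefix_fires lt y b x y \<or> prefix_fires lt y b y x \<or>
      (\<not> x \<le> 1 \<and> sum_failed left) \<or> (\<not> y \<le> x \<and> sum_failed down) \<longleftrightarrow> prefix_fails lt y b x"
    using prefix_fails_step[OF x_pos x_le_y] left down by (auto simp: summary_at_def)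
  have "summary_step (x \<le> 1) (y \<le> x) b (lt x) (lt y) left down =
    Summary {(i, j, S, ob). i \<le> max_offset \<and> j \<le> max_offset \<and> S \<in> heads \<and> window current_facts i j S ob}
      lx ly cx cy
      ((\<exists>cl \<in> set \<Phi>. snd cl = None \<and>
         (\<forall>h \<in> set (fst cl). hyp_sat_window b (y \<le> x) lx ly cx cy (window current_facts) False h)) \<or>
       (\<exists>cl \<in> set \<Phi>. snd cl = None \<and>
         (\<forall>h \<in> set (fst cl). hyp_sat_window b (y \<le> x) lx ly cx cy (window current_facts) True h)) \<or>
       (\<not> x \<le> 1 \<and> sum_failed left) \<or> (\<not> y \<le> x \<and> sum_failed down))"
    unfolding summary_step_def Let_def lfp_eq_current_facts ..
  also have "\<dots> = summary_at lt y b x"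
    unfolding facts_eq goal_fires_window
    unfolding current_point_def fst_conv snd_conv if_True if_False failed
    unfolding letters_x_eq letters_y_eq cap_x_eq cap_y_eq summary_at_def ..
  finally show ?thesis by simp
qed

end

context horn
begin

lemma grid_val_eq_summary_at:
  "1 \<le> x \<Longrightarrow> x \<le> y \<Longrightarrow> grid_val summary_step d w x y b = summary_at (\<lambda>p. w ! (p - 1)) y b x"
proof (induction "x + y" arbitrary: x y b rule: less_induct)
  case less
  let ?lt = "\<lambda>p. w ! (p - 1)"
  define left where "left = (if x \<le> 1 then d else grid_val summary_step d w (x - 1) y b)"
  define down where "down = (if y \<le> x then d else grid_val summary_step d w x (y - 1) False)"
  have "2 \<le> x \<Longrightarrow> left = summary_at ?lt y b (x - 1)" "x < y \<Longrightarrow> down = summary_at ?lt (y - 1) False x"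
    unfolding left_def down_def using less by auto
  then interpret horn_point \<Phi> ?lt y b x left down
    by unfold_locales (use less in auto)
  have "grid_val summary_step d w x y b = summary_step (x \<le> 1) (y \<le> x) b (?lt x) (?lt y) left down"
    unfolding left_def down_def by (simp add: grid_val.simps[of summary_step d w x y b])
  then show ?case using summary_at_step by simp
qed

definition bounded_summaries :: "'a summary set" where
  "bounded_summaries = {v. sum_facts v \<subseteq> {..max_offset} \<times> {..max_offset} \<times> heads \<times> UNIV \<and>
    length (sum_letters_x v) = Suc max_offset \<and> length (sum_letters_y v) = Suc max_offset \<and>
    sum_cap_x v \<le> max_offset + 2 \<and> sum_cap_y v \<le> max_offset + 2}"

lemma summary_step_bounded: "summary_step x_le_1 y_le_x b a c left down \<in> bounded_summaries"
  unfolding bounded_summaries_def summary_step_def Let_def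
  by (auto simp: step_letters_x_def step_letters_y_def step_cap_x_def step_cap_y_def min_def)

lemma finite_bounded_summaries:
  assumes "finite (UNIV :: 'a set)"
  shows "finite bounded_summaries"
proof -
  let ?L = "{xs :: 'a list. set xs \<subseteq> UNIV \<and> length xs = Suc max_offset}"
  let ?B = "Pow ({..max_offset} \<times> {..max_offset} \<times> heads \<times> (UNIV :: bool set)) \<times> ?L \<times> ?L \<times>
    {..max_offset + 2} \<times> {..max_offset + 2} \<times> (UNIV :: bool set)"
  have "finite ?B"
    using finite_heads assms
    by (intro finite_cartesian_product finite_Pow_iff[THEN iffD2] finite_lists_length_eq) auto
  moreover have "bounded_summaries \<subseteq> (\<lambda>(F, lx, ly, cx, cy, fl). Summary F lx ly cx cy fl) ` ?B"
  proof
    fix v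
    assume "v \<in> bounded_summaries"
    then show "v \<in> (\<lambda>(F, lx, ly, cx, cy, fl). Summary F lx ly cx cy fl) ` ?B"
      by (intro image_eqI[where x = "(sum_facts v, sum_letters_x v, sum_letters_y v, sum_cap_x v,
          sum_cap_y v, sum_failed v)"]) (auto simp: bounded_summaries_def)
  qed
  ultimately show ?thesis by (rule finite_subset[OF _ finite_imageI, rotated])
qed

lemma prefix_fails_whole_word:
  "prefix_fails lt n True n \<longleftrightarrow>
    (\<exists>p q. 1 \<le> p \<and> p \<le> n \<and> 1 \<le> q \<and> q \<le> n \<and>
      goal_fires lt (\<lambda>p. p = n) (least_model lt n (\<lambda>p. p = n)) p q)"
  (is "_ \<longleftrightarrow> (\<exists>p q. _ \<and> _ \<and> _ \<and> _ \<and> ?fires p q)")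
proof
  have "(\<lambda>p. True \<and> p = n) = (\<lambda>p. p = n)" by simp
  moreover assume "prefix_fails lt n True n"
  ultimately show "\<exists>p q. 1 \<le> p \<and> p \<le> n \<and> 1 \<le> q \<and> q \<le> n \<and> ?fires p q"
    unfolding prefix_fails_def by (metis order_trans)
next
  assume "\<exists>p q. 1 \<le> p \<and> p \<le> n \<and> 1 \<le> q \<and> q \<le> n \<and> ?fires p q"
  then obtain p q where pq: "1 \<le> p" "p \<le> n" "1 \<le> q" "q \<le> n" "?fires p q" by blast
  show "prefix_fails lt n True n"
  proof (cases "p \<le> q")
    case True
    then show ?thesis unfolding prefix_fails_def using pq by (intro exI[of _ p] exI[of _ q]) auto
  next
    case False
    then show ?thesis unfolding prefix_fails_def using pq by (intro exI[of _ q] exI[of _ p]) auto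
  qed
qed

end

lemma RealTime_CA_if_pred_ESO_HORN:
  fixes L :: "('a::finite) list set"
  assumes "pred_ESO_HORN L"
  shows "RealTime_CA L"
proof -
  obtain \<Phi> :: "'a horn_formula" where L: "L = {w. w \<noteq> [] \<and> models w \<Phi>}"
    using assms unfolding pred_ESO_HORN_def by blast
  interpret horn \<Phi> .
  show ?thesis
  proof (rule RealTime_CA_if_grid_val)
    show "finite bounded_summaries" by (rule finite_bounded_summaries) simp
    show "summary_step x_le_1 y_le_x b a c left down \<in> bounded_summaries"
      for x_le_1 y_le_x b a c left down
      by (rule summary_step_bounded)
    fix w :: "'a list"
    assume "w \<noteq> []"
    then have "grid_val summary_step undefined w (length w) (length w) True =
        summary_at (\<lambda>p. w ! (p - 1)) (length w) True (length w)"
      by (intro grid_val_eq_summary_at) (simp_all add: Suc_le_eq)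
    then show "w \<in> L \<longleftrightarrow>
        grid_val summary_step undefined w (length w) (length w) True \<in> {v. \<not> sum_failed v}"
      using prefix_fails_whole_word models_iff_no_goal_fires \<open>w \<noteq> []\<close> L by (simp add: summary_at_def)
  qed
qed

theorem theorem1:
  fixes L :: "('a::finite) list set"
  assumes "L \<subseteq> {w. w \<noteq> []}"
  shows "RealTime_CA L \<longleftrightarrow> pred_ESO_HORN L"
  using pred_ESO_HORN_if_RealTime_CA[OF assms] RealTime_CA_if_pred_ESO_HORN by blast

end
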